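(* Let $\Lambda\in P^+$ and let $\beta=\alpha_{j_1}+\dots+\alpha_{j_n}$ with $j_1,\dots,j_n\in I$ pairwise distinct. Let $\mu,\nu\in I^\beta$ with $e(\mu)\ne0$ and $e(\nu)\neq0$ in $R^\Lambda(\beta)$. Then $\mu\sim\nu$, i.e. there is a sequence $\mu^{[0]}=\mu,\mu^{[1]},\dots,\mu^{[k]}=\nu$ of elements of $I^\beta$ such that $e(\mu^{[t-1]})R^\Lambda(\beta)e(\mu^{[t]})\neq0$ for all $1\le t\le k$.
   Context: Fix a field $\mathbf{k}$ of characteristic $\neq 2$. A Cartan superdatum consists of an index set $I$; a symmetrizable generalized Cartan matrix $A=(a_{ij})_{i,j\in I}$ ($a_{ii}=2$, $a_{ij}\le 0$ for $i\ne j$, $a_{ij}=0\iff a_{ji}=0$, positive integers $d_i$ with $d_ia_{ij}=d_ja_{ji}$); a free abelian group $P$; $\mathbb{Z}$-linearly independent $\alpha_i\in P$; $h_i\in\mathrm{Hom}_{\mathbb{Z}}(P,\mathbb{Z})$ with $\langle h_i,\alpha_j\rangle=a_{ij}$; and $I=I_{\mathrm{even}}\sqcup I_{\mathrm{odd}}$ with $a_{ij}\in2\mathbb{Z}$ whenever $i\in I_{\mathrm{odd}}$. A symmetric bilinear form $(\cdot|\cdot)$ on $P$ satisfies $(\alpha_i|\lambda)=d_i\langle h_i,\lambda\rangle$. Parity $\mathrm{p}(i)=1$ if $i\in I_{\mathrm{odd}}$, $0$ otherwise. $P^+=\{\Lambda:\langle h_i,\Lambda\rangle\ge0\ \forall i\}$;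 $I^\beta=\{\nu\in I^n:\sum_s\alpha_{\nu_s}=\beta\}$. For $\nu\in I^n$, $\mathcal{P}_\nu=\mathbf{k}\langle\mathrm{x}_1,\dots,\mathrm{x}_n\rangle/(\mathrm{x}_a\mathrm{x}_b-(-1)^{\mathrm{p}(\nu_a)\mathrm{p}(\nu_b)}\mathrm{x}_b\mathrm{x}_a)$. Fix $Q_{ij}(\mathrm{x}_1,\mathrm{x}_2)=\sum_{r,s}t_{i,j;(r,s)}\mathrm{x}_1^r\mathrm{x}_2^s\in\mathcal{P}_{(i,j)}$ with: $t_{i,j;(r,s)}\ne0$ only if $-2(\alpha_i|\alpha_j)-r(\alpha_i|\alpha_i)-s(\alpha_j|\alpha_j)=0$; $t_{i,j;(r,s)}=t_{j,i;(s,r)}$; $t_{i,j;(-a_{ij},0)}\in\mathbf{k}^\times$; $t_{i,j;(r,s)}=0$ if $i=j$ or ($i\in I_{\mathrm{odd}}$ and $r$ odd). $R(\beta)$ is the $\mathbf{k}$-algebra with generators $e(\nu)$ ($\nu\in I^\beta$), $x_1,\dots,x_n$, $\tau_1,\dots,\tau_{n-1}$ and relations: $e(\mu)e(\nu)=\delta_{\mu\nu}e(\nu)$, $\sum_\nu e(\nu)=1$; $x_px_qe(\nu)=(-1)^{\mathrm{p}(\nu_p)\mathrm{p}(\nu_q)}x_qx_pe(\nu)$ ($p\ne q$); $x_pe(\nu)=e(\nu)x_p$; $\tau_ae(\nu)=e(s_a\nu)\tau_a$; $\tau_ax_pe(\nu)=(-1)^{\mathrm{p}(\nu_p)\mathrm{p}(\nu_a)\mathrm{p}(\nu_{a+1})}x_p\tau_ae(\nu)$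 ($p\ne a,a+1$); $(\tau_ax_{a+1}-(-1)^{\mathrm{p}(\nu_a)\mathrm{p}(\nu_{a+1})}x_a\tau_a)e(\nu)=(x_{a+1}\tau_a-(-1)^{\mathrm{p}(\nu_a)\mathrm{p}(\nu_{a+1})}\tau_ax_a)e(\nu)=\delta_{\nu_a,\nu_{a+1}}e(\nu)$; $\tau_a^2e(\nu)=Q_{\nu_a,\nu_{a+1}}(x_a,x_{a+1})e(\nu)$; $\tau_a\tau_be(\nu)=(-1)^{\mathrm{p}(\nu_a)\mathrm{p}(\nu_{a+1})\mathrm{p}(\nu_b)\mathrm{p}(\nu_{b+1})}\tau_b\tau_ae(\nu)$ ($|a-b|>1$); $(\tau_{a+1}\tau_a\tau_{a+1}-\tau_a\tau_{a+1}\tau_a)e(\nu)$ equals $\frac{Q_{\nu_a,\nu_{a+1}}(x_{a+2},x_{a+1})-Q_{\nu_a,\nu_{a+1}}(x_a,x_{a+1})}{x_{a+2}-x_a}e(\nu)$ if $\nu_a=\nu_{a+2}\in I_{\mathrm{even}}$, $(-1)^{\mathrm{p}(\nu_{a+1})}(x_{a+2}-x_a)\frac{Q_{\nu_a,\nu_{a+1}}(x_{a+2},x_{a+1})-Q_{\nu_a,\nu_{a+1}}(x_a,x_{a+1})}{x_{a+2}^2-x_a^2}e(\nu)$ if $\nu_a=\nu_{a+2}\in I_{\mathrm{odd}}$, $0$ otherwise; $s_a=(a,a+1)$, and $\mathfrak{S}_n$ acts on $I^n$ by $(w\nu)_j=\nu_{w^{-1}(j)}$. For $\Lambda\in P^+$,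 $R^\Lambda(\beta)=R(\beta)/\langle\sum_{\nu}x_1^{\langle h_{\nu_1},\Lambda\rangle}e(\nu)\rangle$. *)

theory Defs
  imports Complex_Main
begin

definition zsc :: "int \<Rightarrow> 'a::ab_group_add \<Rightarrow> 'a" where
  "zsc k x = (if 0 \<le> k then (\<Sum>_\<in>{..<nat k}. x) else - (\<Sum>_\<in>{..<nat (- k)}. x))"

definition zlin_indep :: "'i set \<Rightarrow> ('i \<Rightarrow> 'a::ab_group_add) \<Rightarrow> bool" where
  "zlin_indep I v \<longleftrightarrow> (\<forall>F c. finite F \<longrightarrow> F \<subseteq> I \<longrightarrow>
      (\<Sum>i\<in>F. zsc (c i) (v i)) = 0 \<longrightarrow> (\<forall>i\<in>F. c i = 0))"

definition zfree_basis :: "'a::ab_group_add set \<Rightarrow> bool" where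
  "zfree_basis B \<longleftrightarrow> zlin_indep B id \<and>
     (\<forall>x. \<exists>F c. finite F \<and> F \<subseteq> B \<and> x = (\<Sum>b\<in>F. zsc (c b) b))"

definition Ibeta :: "'i set \<Rightarrow> ('i \<Rightarrow> 'p::comm_monoid_add) \<Rightarrow> 'p \<Rightarrow> 'i list set" where
  "Ibeta I \<alpha> \<beta> = {\<nu>. set \<nu> \<subseteq> I \<and> sum_list (map \<alpha> \<nu>) = \<beta>}"

section \<open>Free associative algebra on generators (0-based indices)\<close>

datatype 'i gen = GE "'i list" | GX nat | GT nat

type_synonym ('i, 'k) fa = "'i gen list \<Rightarrow> 'k"

definition fa_lin :: "('k::field \<times> 'i gen list) list \<Rightarrow> ('i, 'k) fa" where
  "fa_lin xs = (\<lambda>w. sum_list (map (\<lambda>(c, u). if u = w then c else 0) xs))"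

definition fa_mult :: "('i, 'k::field) fa \<Rightarrow> ('i, 'k) fa \<Rightarrow> ('i, 'k) fa" where
  "fa_mult f g = (\<lambda>w. \<Sum>i\<le>length w. f (take i w) * g (drop i w))"

definition valid_gen :: "'i list set \<Rightarrow> nat \<Rightarrow> 'i gen \<Rightarrow> bool" where
  "valid_gen Ib n g = (case g of GE \<nu> \<Rightarrow> \<nu> \<in> Ib | GX p \<Rightarrow> p < n | GT a \<Rightarrow> Suc a < n)"

text \<open>Elements of the free algebra on the generators e(nu) (nu in I^beta), x_p, tau_a.\<close>
definition fa_elem :: "'i list set \<Rightarrow> nat \<Rightarrow> ('i, 'k::field) fa \<Rightarrow> bool" where
  "fa_elem Ib n f \<longleftrightarrow> finite {w. f w \<noteq> 0} \<and>
     (\<forall>w. f w \<noteq> 0 \<longrightarrow> (\<forall>g\<in>set w. valid_gen Ib n g))"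

text \<open>Two-sided ideal generated by S, multipliers ranging over the algebra M.\<close>
inductive in_ideal :: "(('i, 'k::field) fa \<Rightarrow> bool) \<Rightarrow> ('i, 'k) fa set \<Rightarrow> ('i, 'k) fa \<Rightarrow> bool"
  for M S where
  gen: "s \<in> S \<Longrightarrow> in_ideal M S s"
| zero: "in_ideal M S (\<lambda>_. 0)"
| add: "in_ideal M S f \<Longrightarrow> in_ideal M S g \<Longrightarrow> in_ideal M S (\<lambda>w. f w + g w)"
| smult: "in_ideal M S f \<Longrightarrow> in_ideal M S (\<lambda>w. c * f w)"
| lmult: "M a \<Longrightarrow> in_ideal M S f \<Longrightarrow> in_ideal M S (fa_mult a f)"
| rmult: "M a \<Longrightarrow> in_ideal M S f \<Longrightarrow> in_ideal M S (fa_mult f a)"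

definition sg :: "bool \<Rightarrow> 'k::field" where
  "sg b = (if b then - 1 else 1)"

definition swp :: "nat \<Rightarrow> 'i list \<Rightarrow> 'i list" where
  "swp a \<nu> = \<nu>[a := \<nu> ! Suc a, Suc a := \<nu> ! a]"

definition Qel :: "('i \<Rightarrow> 'i \<Rightarrow> nat \<Rightarrow> nat \<Rightarrow> 'k::field) \<Rightarrow> 'i \<Rightarrow> 'i \<Rightarrow> nat \<Rightarrow> nat \<Rightarrow> 'i list \<Rightarrow> ('i, 'k) fa" where
  "Qel t i j a b \<nu> = (\<lambda>w. \<Sum>r\<le>length w. \<Sum>s\<le>length w.
      if w = replicate r (GX a) @ replicate s (GX b) @ [GE \<nu>] then t i j r s else 0)"

text \<open>(Q_{ij}(x_{a+2},x_{a+1}) - Q_{ij}(x_a,x_{a+1}))/(x_{a+2}-x_a) e(nu), written out.\<close>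
definition Beven :: "('i \<Rightarrow> 'i \<Rightarrow> nat \<Rightarrow> nat \<Rightarrow> 'k::field) \<Rightarrow> 'i \<Rightarrow> 'i \<Rightarrow> nat \<Rightarrow> 'i list \<Rightarrow> ('i, 'k) fa" where
  "Beven t i j a \<nu> = (\<lambda>w. \<Sum>r\<le>length w + 2. \<Sum>s\<le>length w + 2. \<Sum>k<r.
      if w = replicate k (GX (a+2)) @ replicate (r - 1 - k) (GX a) @ replicate s (GX (a+1)) @ [GE \<nu>]
      then t i j r s else 0)"

text \<open>(Q_{ij}(x_{a+2},x_{a+1}) - Q_{ij}(x_a,x_{a+1}))/(x_{a+2}^2-x_a^2) e(nu), written out
  (for i odd only even powers of the first variable occur).\<close>
definition Bodd :: "('i \<Rightarrow> 'i \<Rightarrow> nat \<Rightarrow> nat \<Rightarrow> 'k::field) \<Rightarrow> 'i \<Rightarrow> 'i \<Rightarrow> nat \<Rightarrow> 'i list \<Rightarrow> ('i, 'k) fa" where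
  "Bodd t i j a \<nu> = (\<lambda>w. \<Sum>r\<le>length w + 2. \<Sum>s\<le>length w + 2. \<Sum>k<r div 2.
      if w = replicate (2 * k) (GX (a+2)) @ replicate (r - 2 - 2 * k) (GX a) @ replicate s (GX (a+1)) @ [GE \<nu>]
      then t i j r s else 0)"

definition braid_rhs :: "'i set \<Rightarrow> ('i \<Rightarrow> 'i \<Rightarrow> nat \<Rightarrow> nat \<Rightarrow> 'k::field) \<Rightarrow> nat \<Rightarrow> 'i list \<Rightarrow> ('i, 'k) fa" where
  "braid_rhs Iodd t a \<nu> =
    (if \<nu> ! a = \<nu> ! (a+2) \<and> \<nu> ! a \<notin> Iodd then Beven t (\<nu> ! a) (\<nu> ! (a+1)) a \<nu>
     else if \<nu> ! a = \<nu> ! (a+2) \<and> \<nu> ! a \<in> Iodd then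
       (\<lambda>w. sg (\<nu> ! (a+1) \<in> Iodd) *
          fa_mult (fa_lin [(1, [GX (a+2)]), (- 1, [GX a])]) (Bodd t (\<nu> ! a) (\<nu> ! (a+1)) a \<nu>) w)
     else (\<lambda>_. 0))"

definition relsR :: "'i set \<Rightarrow> ('i \<Rightarrow> 'i \<Rightarrow> nat \<Rightarrow> nat \<Rightarrow> 'k::field) \<Rightarrow> 'i list set \<Rightarrow> nat \<Rightarrow> ('i, 'k) fa set" where
  "relsR Iodd t Ib n =
    {fa_lin ([(1, [GE \<mu>, GE \<nu>])] @ (if \<mu> = \<nu> then [(- 1, [GE \<nu>])] else [])) | \<mu> \<nu>. \<mu> \<in> Ib \<and> \<nu> \<in> Ib}
  \<union> {(\<lambda>w. (if \<exists>\<nu>\<in>Ib. w = [GE \<nu>] then 1 else 0) - (if w = [] then 1 else 0))}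
  \<union> {fa_lin [(1, [GX p, GX q, GE \<nu>]), (- sg (\<nu> ! p \<in> Iodd \<and> \<nu> ! q \<in> Iodd), [GX q, GX p, GE \<nu>])]
      | p q \<nu>. \<nu> \<in> Ib \<and> p < n \<and> q < n \<and> p \<noteq> q}
  \<union> {fa_lin [(1, [GX p, GE \<nu>]), (- 1, [GE \<nu>, GX p])] | p \<nu>. \<nu> \<in> Ib \<and> p < n}
  \<union> {fa_lin [(1, [GT a, GE \<nu>]), (- 1, [GE (swp a \<nu>), GT a])] | a \<nu>. \<nu> \<in> Ib \<and> Suc a < n}
  \<union> {fa_lin [(1, [GT a, GX p, GE \<nu>]),
        (- sg (\<nu> ! p \<in> Iodd \<and> \<nu> ! a \<in> Iodd \<and> \<nu> ! (a+1) \<in> Iodd), [GX p, GT a, GE \<nu>])]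
      | a p \<nu>. \<nu> \<in> Ib \<and> Suc a < n \<and> p < n \<and> p \<noteq> a \<and> p \<noteq> a + 1}
  \<union> {fa_lin ([(1, [GT a, GX (a+1), GE \<nu>]), (- sg (\<nu> ! a \<in> Iodd \<and> \<nu> ! (a+1) \<in> Iodd), [GX a, GT a, GE \<nu>])]
        @ (if \<nu> ! a = \<nu> ! (a+1) then [(- 1, [GE \<nu>])] else []))
      | a \<nu>. \<nu> \<in> Ib \<and> Suc a < n}
  \<union> {fa_lin ([(1, [GX (a+1), GT a, GE \<nu>]), (- sg (\<nu> ! a \<in> Iodd \<and> \<nu> ! (a+1) \<in> Iodd), [GT a, GX a, GE \<nu>])]
        @ (if \<nu> ! a = \<nu> ! (a+1) then [(- 1, [GE \<nu>])] else []))
      | a \<nu>. \<nu> \<in> Ib \<and> Suc a < n}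
  \<union> {(\<lambda>w. fa_lin [(1, [GT a, GT a, GE \<nu>])] w - Qel t (\<nu> ! a) (\<nu> ! (a+1)) a (a+1) \<nu> w)
      | a \<nu>. \<nu> \<in> Ib \<and> Suc a < n}
  \<union> {fa_lin [(1, [GT a, GT b, GE \<nu>]),
        (- sg (\<nu> ! a \<in> Iodd \<and> \<nu> ! (a+1) \<in> Iodd \<and> \<nu> ! b \<in> Iodd \<and> \<nu> ! (b+1) \<in> Iodd), [GT b, GT a, GE \<nu>])]
      | a b \<nu>. \<nu> \<in> Ib \<and> Suc a < n \<and> Suc b < n \<and> (a + 1 < b \<or> b + 1 < a)}
  \<union> {(\<lambda>w. fa_lin [(1, [GT (a+1), GT a, GT (a+1), GE \<nu>]), (- 1, [GT a, GT (a+1), GT a, GE \<nu>])] w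
          - braid_rhs Iodd t a \<nu> w)
      | a \<nu>. \<nu> \<in> Ib \<and> a + 2 < n}"

text \<open>The cyclotomic relation sum_nu x_1^{<h_{nu_1},Lambda>} e(nu) (x_1 is GX 0).\<close>
definition relsCyc :: "('i \<Rightarrow> 'p \<Rightarrow> int) \<Rightarrow> 'p \<Rightarrow> 'i list set \<Rightarrow> nat \<Rightarrow> ('i, 'k::field) fa set" where
  "relsCyc h \<Lambda> Ib n = (if 0 < n then
     {(\<lambda>w. if \<exists>\<nu>\<in>Ib. w = replicate (nat (h (\<nu> ! 0) \<Lambda>)) (GX 0) @ [GE \<nu>] then 1 else 0)} else {})"

definition RL_zero :: "'i set \<Rightarrow> ('i \<Rightarrow> 'i \<Rightarrow> nat \<Rightarrow> nat \<Rightarrow> 'k::field) \<Rightarrow> ('i \<Rightarrow> 'p \<Rightarrow> int) \<Rightarrow> 'p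
    \<Rightarrow> 'i list set \<Rightarrow> nat \<Rightarrow> ('i, 'k) fa \<Rightarrow> bool" where
  "RL_zero Iodd t h \<Lambda> Ib n f \<longleftrightarrow> in_ideal (fa_elem Ib n) (relsR Iodd t Ib n \<union> relsCyc h \<Lambda> Ib n) f"

definition idem :: "'i list \<Rightarrow> ('i, 'k::field) fa" where
  "idem \<nu> = fa_lin [(1, [GE \<nu>])]"

end

theory Submission
  imports Defs
begin

text \<open>Since \<open>\<beta>\<close> is multiplicity free, \<open>I\<^sup>\<beta>\<close> consists of the orderings of the distinct
  \<open>j\<^sub>1, \<dots>, j\<^sub>n\<close>. Call \<open>\<nu>\<close> admissible if
  \<open>\<langle>h\<^sub>\<nu>\<^sub>k, \<Lambda> - \<alpha>\<^sub>\<nu>\<^sub>1 - \<dots> - \<alpha>\<^sub>\<nu>\<^sub>k\<^sub>-\<^sub>1\<rangle> > 0\<close> for all \<open>k\<close>.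
  If \<open>\<nu>\<close> is not admissible, some entry \<open>\<nu>\<^sub>k\<close> with \<open>\<langle>h\<^sub>\<nu>\<^sub>k, \<Lambda>\<rangle> = 0\<close> is orthogonal to all
  earlier entries; moving it to the front by swaps of orthogonal neighbours (across which
  \<open>\<tau>\<^sub>a\<^sup>2 e(\<nu>)\<close> is an invertible multiple of \<open>e(\<nu>)\<close>) and applying the cyclotomic relation
  gives \<open>e(\<nu>) = 0\<close>. Any two admissible orderings are joined by a chain of admissible orderings
  in which consecutive members differ by an adjacent transposition \<open>s\<^sub>a\<close>. Finally
  \<open>e(s\<^sub>a\<nu>) \<tau>\<^sub>a e(\<nu>) \<noteq> 0\<close> for each such step: it acts nontrivially on the space with basis the
  admissible orderings, where every \<open>x\<^sub>p\<close> acts by zero, \<open>e(\<nu>)\<close> by projection, and \<open>\<tau>\<^sub>a\<close> by a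
  signed and rescaled swap that is permitted across orthogonal neighbours and across the one
  pair \<open>(\<nu>\<^sub>a, \<nu>\<^sub>a\<^sub>+\<^sub>1)\<close> in the given order only.\<close>

definition fa_word :: "'i gen list \<Rightarrow> ('i, 'k::field) fa" where
  "fa_word u = (\<lambda>w. if w = u then 1 else 0)"

lemma fa_lin_Nil: "fa_lin [] = (\<lambda>w. 0)"
  by (simp add: fa_lin_def)

lemma fa_lin_Cons: "fa_lin ((c, u) # xs) = (\<lambda>w. (if w = u then c else 0) + fa_lin xs w)"
  by (auto simp: fa_lin_def fun_eq_iff)

lemma fa_lin_append: "fa_lin (xs @ ys) = (\<lambda>w. fa_lin xs w + fa_lin ys w)"
  by (auto simp: fa_lin_def fun_eq_iff)

lemma idem_eq_fa_word: "idem \<nu> = fa_word [GE \<nu>]"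
  by (simp add: idem_def fa_word_def fa_lin_Cons fa_lin_Nil)

lemma fa_elem_fa_word: "\<forall>g\<in>set u. valid_gen Ib n g \<Longrightarrow> fa_elem Ib n (fa_word u)"
  by (auto simp: fa_elem_def fa_word_def)

lemma fa_mult_word_left:
  "fa_mult (fa_word u) f = (\<lambda>w. if take (length u) w = u then f (drop (length u) w) else 0)"
proof
  fix w :: "'a gen list"
  show "fa_mult (fa_word u) f w = (if take (length u) w = u then f (drop (length u) w) else 0)"
  proof (cases "take (length u) w = u")
    case True
    then have le: "length u \<le> length w" by (metis length_take min.absorb_iff2 nat_le_linear take_all)
    have "fa_mult (fa_word u) f w = (\<Sum>i\<le>length w. if i = length u then f (drop i w) else 0)"
      unfolding fa_mult_def fa_word_def by (rule sum.cong) (auto simp: True)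
    also have "\<dots> = f (drop (length u) w)" using le by simp
    finally show ?thesis using True by simp
  next
    case False
    have "fa_mult (fa_word u) f w = (\<Sum>i\<le>length w. 0)"
      unfolding fa_mult_def fa_word_def
    proof (rule sum.cong)
      fix i assume "i \<in> {..length w}"
      then have "take i w = u \<Longrightarrow> take (length u) w = u" by auto
      then show "(if take i w = u then 1 else 0) * f (drop i w) = 0" using False by auto
    qed simp
    then show ?thesis using False by simp
  qed
qed

lemma fa_mult_word_word: "fa_mult (fa_word u) (fa_word v) = (fa_word (u @ v) :: ('i, 'k::field) fa)"
  unfolding fa_mult_word_left by (auto simp: fa_word_def fun_eq_iff) (metis append_take_drop_id)

lemma fa_mult_word_lin: "fa_mult (fa_word u) (fa_lin xs) = fa_lin (map (\<lambda>(c, v). (c, u @ v)) xs)"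
proof (induction xs)
  case Nil
  then show ?case by (simp add: fa_mult_word_left fa_lin_Nil)
next
  case (Cons p xs)
  obtain c v where p: "p = (c, v)" by (cases p)
  have "fa_mult (fa_word u) (fa_lin (p # xs)) =
      (\<lambda>w. (if w = u @ v then c else 0) + fa_mult (fa_word u) (fa_lin xs) w)"
    unfolding fa_mult_word_left p fa_lin_Cons
    by (auto simp: fun_eq_iff append_eq_conv_conj) (metis append_take_drop_id)
  then show ?case using Cons by (simp add: p fa_lin_Cons)
qed

lemma fa_mult_sum_left:
  "finite B \<Longrightarrow> fa_mult (\<lambda>w. \<Sum>x\<in>B. F x w) g = (\<lambda>w. \<Sum>x\<in>B. fa_mult (F x) g w)"
  unfolding fa_mult_def by (auto simp: sum_distrib_right fun_eq_iff intro: sum.swap)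

lemma indicator_eq_sum_fa_word:
  assumes "finite B" and "inj_on W B"
  shows "(\<lambda>w. if \<exists>\<nu>\<in>B. w = W \<nu> then 1 else 0) = (\<lambda>w. \<Sum>\<nu>\<in>B. fa_word (W \<nu>) w :: 'k::field)"
proof
  fix w
  show "(if \<exists>\<nu>\<in>B. w = W \<nu> then 1 else 0) = (\<Sum>\<nu>\<in>B. fa_word (W \<nu>) w :: 'k)"
  proof (cases "\<exists>\<nu>\<in>B. w = W \<nu>")
    case True
    then obtain \<nu>0 where \<nu>0: "\<nu>0 \<in> B" "w = W \<nu>0" by blast
    have "(\<Sum>\<nu>\<in>B. fa_word (W \<nu>) w :: 'k) = (\<Sum>\<nu>\<in>B. if \<nu> = \<nu>0 then 1 else 0)"
      by (rule sum.cong) (use \<nu>0 assms(2) in \<open>auto simp: fa_word_def inj_on_def\<close>)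
    then show ?thesis using True \<nu>0 assms(1) by simp
  next
    case False
    then show ?thesis by (auto simp: fa_word_def intro!: sum.neutral[symmetric])
  qed
qed

lemma in_ideal_diff: "in_ideal M S f \<Longrightarrow> in_ideal M S g \<Longrightarrow> in_ideal M S (\<lambda>w. f w - g w)"
  using in_ideal.add[of M S f "\<lambda>w. (-1) * g w"] in_ideal.smult[of M S g "-1"] by simp

lemma in_ideal_sum:
  "finite A \<Longrightarrow> (\<And>x. x \<in> A \<Longrightarrow> in_ideal M S (F x)) \<Longrightarrow> in_ideal M S (\<lambda>w. \<Sum>x\<in>A. F x w)"
proof (induction A rule: finite_induct)
  case empty
  then show ?case by (simp add: in_ideal.zero)
next
  case (insert a A)
  then have "in_ideal M S (\<lambda>w. F a w + (\<Sum>x\<in>A. F x w))" by (intro in_ideal.add) auto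
  then show ?case using insert by simp
qed

lemma length_swp [simp]: "length (swp b \<rho>) = length \<rho>"
  by (simp add: swp_def)

lemma nth_swp:
  "Suc b < length \<rho> \<Longrightarrow>
    swp b \<rho> ! k = (if k = b then \<rho> ! Suc b else if k = Suc b then \<rho> ! b else \<rho> ! k)"
  by (auto simp: swp_def nth_list_update)

lemma nth_swp_simps [simp]:
  "Suc b < length \<rho> \<Longrightarrow> swp b \<rho> ! b = \<rho> ! Suc b"
  "Suc b < length \<rho> \<Longrightarrow> swp b \<rho> ! Suc b = \<rho> ! b"
  "Suc b < length \<rho> \<Longrightarrow> k \<noteq> b \<Longrightarrow> k \<noteq> Suc b \<Longrightarrow> swp b \<rho> ! k = \<rho> ! k"
  by (auto simp: nth_swp)

lemma swp_swp [simp]: "Suc b < length \<rho> \<Longrightarrow> swp b (swp b \<rho>) = \<rho>"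
  by (rule nth_equalityI) (auto simp: nth_swp)

lemma split_at_adjacent:
  "Suc b < length \<rho> \<Longrightarrow> \<rho> = take b \<rho> @ \<rho> ! b # \<rho> ! Suc b # drop (Suc (Suc b)) \<rho>"
  by (metis Cons_nth_drop_Suc Suc_lessD append_take_drop_id)

lemma swp_append: "swp (length p) (p @ x # y # r) = p @ y # x # r"
  by (rule nth_equalityI) (auto simp: nth_swp nth_append nth_Cons' split: if_splits)

lemma swp_eq:
  assumes "Suc b < length \<rho>"
  shows "swp b \<rho> = take b \<rho> @ \<rho> ! Suc b # \<rho> ! b # drop (Suc (Suc b)) \<rho>"
  using swp_append[of "take b \<rho>" "\<rho> ! b" "\<rho> ! Suc b" "drop (Suc (Suc b)) \<rho>"]
    split_at_adjacent[OF assms] assms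
  by simp

lemma length_filter_swp: "Suc b < length \<rho> \<Longrightarrow> length (filter P (swp b \<rho>)) = length (filter P \<rho>)"
  by (subst swp_eq, simp, subst (3) split_at_adjacent, auto)

lemma set_swp: "Suc b < length \<rho> \<Longrightarrow> set (swp b \<rho>) = set \<rho>"
  by (subst swp_eq, simp, subst (3) split_at_adjacent, auto)

lemma sum_list_map_swp:
  "Suc b < length \<rho> \<Longrightarrow> sum_list (map (f :: 'a \<Rightarrow> 'b::comm_monoid_add) (swp b \<rho>)) = sum_list (map f \<rho>)"
  by (subst swp_eq, simp, subst (3) split_at_adjacent, auto simp: add_ac)

lemma take_swp_le: "Suc b < length \<rho> \<Longrightarrow> k \<le> b \<Longrightarrow> take k (swp b \<rho>) = take k \<rho>"
  by (rule nth_equalityI) (auto simp: nth_swp)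

lemma take_swp_ge: "Suc b < length \<rho> \<Longrightarrow> Suc b < k \<Longrightarrow> take k (swp b \<rho>) = swp b (take k \<rho>)"
  by (rule nth_equalityI) (auto simp: nth_swp min_def nth_take split: if_splits)

lemma swp_commute:
  "Suc a < length \<rho> \<Longrightarrow> Suc b < length \<rho> \<Longrightarrow> Suc a < b \<Longrightarrow> swp a (swp b \<rho>) = swp b (swp a \<rho>)"
  by (rule nth_equalityI) (auto simp: nth_swp)

lemma swp_braid:
  "Suc (Suc a) < length \<rho> \<Longrightarrow> swp (Suc a) (swp a (swp (Suc a) \<rho>)) = swp a (swp (Suc a) (swp a \<rho>))"
  by (rule nth_equalityI) (auto simp: nth_swp)

section \<open>Multiplicity-free weights\<close>

lemma sum_lessThan_const_add: "(\<Sum>_\<in>{..<m + (k::nat)}. x) = (\<Sum>_\<in>{..<m}. x) + (\<Sum>_\<in>{..<k}. (x::'a::ab_group_add))"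
  by (induction k) (simp_all add: add.assoc)

lemma zsc_of_nat_diff: "zsc (int a - int b) x = (\<Sum>_\<in>{..<a}. x) - (\<Sum>_\<in>{..<b}. x)"
proof (cases "b \<le> a")
  case True
  then have "(\<Sum>_\<in>{..<a}. x) = (\<Sum>_\<in>{..<a - b}. x) + (\<Sum>_\<in>{..<b}. x)"
    using sum_lessThan_const_add[of x "a - b" b] by simp
  moreover have "nat (int a - int b) = a - b" using True by simp
  ultimately show ?thesis using True by (simp add: zsc_def)
next
  case False
  then have "(\<Sum>_\<in>{..<b}. x) = (\<Sum>_\<in>{..<b - a}. x) + (\<Sum>_\<in>{..<a}. x)"
    using sum_lessThan_const_add[of x "b - a" a] by simp
  moreover have "nat (- (int a - int b)) = b - a" using False by simp
  ultimately show ?thesis using False by (simp add: zsc_def)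
qed

lemma sum_list_map_eq_count:
  "finite F \<Longrightarrow> set xs \<subseteq> F \<Longrightarrow>
    sum_list (map \<alpha> xs) = (\<Sum>i\<in>F. \<Sum>_\<in>{..<count_list xs i}. (\<alpha> i :: 'a::ab_group_add))"
proof (induction xs)
  case Nil
  then show ?case by simp
next
  case (Cons x xs)
  have "(\<Sum>i\<in>F. \<Sum>_\<in>{..<count_list (x # xs) i}. \<alpha> i) =
      (\<Sum>i\<in>F. (\<Sum>_\<in>{..<count_list xs i}. \<alpha> i) + (if i = x then \<alpha> i else 0))"
    by (rule sum.cong) auto
  also have "\<dots> = (\<Sum>i\<in>F. \<Sum>_\<in>{..<count_list xs i}. \<alpha> i) + \<alpha> x"
    using Cons.prems by (simp add: sum.distrib)
  finally show ?case using Cons by (simp add: add.commute)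
qed

lemma count_list_eq_if_zlin_indep:
  assumes "zlin_indep I \<alpha>" and "set \<sigma> \<subseteq> I" and "set \<rho> \<subseteq> I"
    and "sum_list (map \<alpha> \<sigma>) = sum_list (map \<alpha> \<rho>)"
  shows "count_list \<sigma> i = count_list \<rho> i"
proof -
  let ?F = "set \<sigma> \<union> set \<rho>"
  let ?c = "\<lambda>i. int (count_list \<sigma> i) - int (count_list \<rho> i)"
  have "(\<Sum>i\<in>?F. zsc (?c i) (\<alpha> i)) = sum_list (map \<alpha> \<sigma>) - sum_list (map \<alpha> \<rho>)"
    using sum_list_map_eq_count[of ?F \<sigma> \<alpha>] sum_list_map_eq_count[of ?F \<rho> \<alpha>]
    by (simp add: zsc_of_nat_diff sum_subtractf)
  then have "\<forall>i\<in>?F. ?c i = 0"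
    using assms(1)[unfolded zlin_indep_def, rule_format, of ?F ?c] assms(2-4) by simp
  then show ?thesis by (cases "i \<in> ?F") auto
qed

lemma Ibeta_multiplicity_free:
  assumes "zlin_indep I \<alpha>" and "set js \<subseteq> I" and "distinct js"
    and "\<sigma> \<in> Ibeta I \<alpha> (sum_list (map \<alpha> js))"
  shows "distinct \<sigma>" and "set \<sigma> = set js" and "length \<sigma> = length js"
proof -
  have "count_list \<sigma> i = count_list js i" for i
    using assms by (intro count_list_eq_if_zlin_indep[of I \<alpha>]) (auto simp: Ibeta_def)
  then have count: "count_list \<sigma> = count_list js" by blast
  then show set: "set \<sigma> = set js" by (metis count_list_0_iff subsetI subset_antisym)
  show len: "length \<sigma> = length js"
    using sum_count_set[of \<sigma> "set js"] sum_count_set[of js "set js"] set count by simp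
  show "distinct \<sigma>"
    using set len distinct_card[OF assms(3)] by (simp add: card_distinct)
qed

lemma finite_Ibeta_multiplicity_free:
  assumes "zlin_indep I \<alpha>" and "set js \<subseteq> I" and "distinct js"
  shows "finite (Ibeta I \<alpha> (sum_list (map \<alpha> js)))"
proof (rule finite_subset)
  show "Ibeta I \<alpha> (sum_list (map \<alpha> js)) \<subseteq> {xs. set xs \<subseteq> set js \<and> length xs = length js}"
    using Ibeta_multiplicity_free[OF assms] by auto
  show "finite {xs. set xs \<subseteq> set js \<and> length xs = length js}"
    by (rule finite_lists_length_eq) simp
qed

lemma swp_in_Ibeta: "\<rho> \<in> Ibeta I \<alpha> \<beta> \<Longrightarrow> Suc b < length \<rho> \<Longrightarrow> swp b \<rho> \<in> Ibeta I \<alpha> \<beta>"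
  by (simp add: Ibeta_def set_swp sum_list_map_swp)

section \<open>Admissible sequences\<close>

text \<open>With \<open>wt z = \<langle>h\<^sub>z, \<Lambda>\<rangle>\<close>, \<open>admissible A wt \<nu>\<close> says
  \<open>\<langle>h\<^sub>\<nu>\<^sub>k, \<Lambda> - \<alpha>\<^sub>\<nu>\<^sub>1 - \<dots> - \<alpha>\<^sub>\<nu>\<^sub>k\<^sub>-\<^sub>1\<rangle> > 0\<close> for all \<open>k\<close>, and
  \<open>weight_after A wt l z = \<langle>h\<^sub>z, \<Lambda> - \<Sum>\<^sub>y\<^sub>\<in>\<^sub>l \<alpha>\<^sub>y\<rangle>\<close>.\<close>

fun admissible :: "('i \<Rightarrow> 'i \<Rightarrow> int) \<Rightarrow> ('i \<Rightarrow> int) \<Rightarrow> 'i list \<Rightarrow> bool" where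
  "admissible A wt [] = True"
| "admissible A wt (x # xs) = (0 < wt x \<and> admissible A (\<lambda>z. wt z - A z x) xs)"

definition weight_after :: "('i \<Rightarrow> 'i \<Rightarrow> int) \<Rightarrow> ('i \<Rightarrow> int) \<Rightarrow> 'i list \<Rightarrow> 'i \<Rightarrow> int" where
  "weight_after A wt l = (\<lambda>z. wt z - sum_list (map (A z) l))"

lemma weight_after_Nil [simp]: "weight_after A wt [] = wt"
  by (simp add: weight_after_def fun_eq_iff)

lemma weight_after_Cons: "weight_after A wt (x # l) = weight_after A (\<lambda>z. wt z - A z x) l"
  by (simp add: weight_after_def fun_eq_iff algebra_simps)

lemma admissible_append:
  "admissible A wt (l @ r) \<longleftrightarrow> admissible A wt l \<and> admissible A (weight_after A wt l) r"
  by (induction l arbitrary: wt) (auto simp: weight_after_Cons)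

lemma admissible_swap_orthogonal:
  "admissible A wt (q @ x # y # r) \<Longrightarrow> A x y = 0 \<Longrightarrow> A y x = 0 \<Longrightarrow> admissible A wt (q @ y # x # r)"
  by (simp add: admissible_append algebra_simps)

lemma admissible_swap_forward:
  "admissible A wt (q @ y # x # r) \<Longrightarrow> 0 < weight_after A wt q x \<Longrightarrow> A y x \<le> 0 \<Longrightarrow>
    admissible A wt (q @ x # y # r)"
  by (simp add: admissible_append algebra_simps)

lemma admissible_swp_orthogonal:
  assumes "Suc b < length \<rho>" and "admissible A wt \<rho>"
    and "A (\<rho> ! b) (\<rho> ! Suc b) = 0" and "A (\<rho> ! Suc b) (\<rho> ! b) = 0"
  shows "admissible A wt (swp b \<rho>)"
  using admissible_swap_orthogonal[of A wt "take b \<rho>" "\<rho> ! b" "\<rho> ! Suc b" "drop (Suc (Suc b)) \<rho>"]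
    assms split_at_adjacent[OF assms(1)] swp_eq[OF assms(1)]
  by simp

lemma admissible_first_weight_pos: "admissible A wt \<rho> \<Longrightarrow> \<rho> \<noteq> [] \<Longrightarrow> 0 < wt (\<rho> ! 0)"
  by (cases \<rho>) auto

lemma weight_after_mono:
  "\<forall>z\<in>set l. A x z \<le> 0 \<Longrightarrow> weight_after A wt p x \<le> weight_after A wt (p @ l) x"
  by (induction l rule: rev_induct) (auto simp: weight_after_def)

text \<open>A non-admissible sequence has an entry of weight zero that is orthogonal to all entries
  before it: the weights only grow along the sequence, and they grow strictly past a
  non-orthogonal entry.\<close>

lemma not_admissible_obtain_zero_weight:
  assumes "\<not> admissible A wt \<rho>" and "\<forall>z\<in>set \<rho>. 0 \<le> wt z" and "distinct \<rho>"
    and "\<forall>x\<in>set \<rho>. \<forall>y\<in>set \<rho>. x \<noteq> y \<longrightarrow> A x y \<le> 0"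
  shows "\<exists>p x q. \<rho> = p @ x # q \<and> wt x = 0 \<and> (\<forall>y\<in>set p. A x y = 0)"
  using assms
proof (induction \<rho> arbitrary: wt)
  case Nil
  then show ?case by simp
next
  case (Cons y \<rho>)
  show ?case
  proof (cases "0 < wt y")
    case False
    then have "wt y = 0" using Cons.prems(2) by fastforce
    then show ?thesis by (intro exI[of _ "[]"]) auto
  next
    case True
    let ?wt = "\<lambda>z. wt z - A z y"
    have "\<not> admissible A ?wt \<rho>" using Cons.prems(1) True by simp
    moreover have "\<forall>z\<in>set \<rho>. 0 \<le> ?wt z"
    proof
      fix z assume "z \<in> set \<rho>"
      then have "A z y \<le> 0" and "0 \<le> wt z" using Cons.prems(2-4) by auto
      then show "0 \<le> ?wt z" by simp
    qed
    ultimately have "\<exists>p x q. \<rho> = p @ x # q \<and> ?wt x = 0 \<and> (\<forall>y\<in>set p. A x y = 0)"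
      using Cons.IH[of ?wt] Cons.prems(3,4) by simp
    then obtain p x q where pxq: "\<rho> = p @ x # q" "?wt x = 0" "\<forall>y\<in>set p. A x y = 0"
      by blast
    have "A x y \<le> 0" and "0 \<le> wt x" using Cons.prems(2-4) pxq(1) by auto
    then have "wt x = 0" "A x y = 0" using pxq(2) by auto
    then show ?thesis using pxq by (intro exI[of _ "y # p"] exI[of _ x] exI[of _ q]) auto
  qed
qed

lemma rtranclp_imp_chain:
  assumes "R\<^sup>*\<^sup>* a b" and "P a" and "\<And>x y. R x y \<Longrightarrow> P y"
  shows "\<exists>seq. seq \<noteq> [] \<and> hd seq = a \<and> last seq = b \<and> (\<forall>x\<in>set seq. P x) \<and>
    (\<forall>k. Suc k < length seq \<longrightarrow> R (seq ! k) (seq ! Suc k))"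
  using assms(1,2)
proof (induction rule: converse_rtranclp_induct)
  case base
  then show ?case by (intro exI[of _ "[b]"]) auto
next
  case (step a a')
  then obtain seq where seq: "seq \<noteq> []" "hd seq = a'" "last seq = b" "\<forall>x\<in>set seq. P x"
      "\<forall>k. Suc k < length seq \<longrightarrow> R (seq ! k) (seq ! Suc k)"
    using assms(3) by blast
  have "\<forall>k. Suc k < length (a # seq) \<longrightarrow> R ((a # seq) ! k) ((a # seq) ! Suc k)"
    using seq(1,2,5) step.hyps(1) by (auto simp: hd_conv_nth nth_Cons split: nat.split)
  then show ?case using seq step.prems by (intro exI[of _ "a # seq"]) auto
qed

section \<open>Vanishing idempotents\<close>

locale multfree_datum =
  fixes I Iodd :: "'i set" and A :: "'i \<Rightarrow> 'i \<Rightarrow> int" and t :: "'i \<Rightarrow> 'i \<Rightarrow> nat \<Rightarrow> nat \<Rightarrow> 'k::field"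
    and h :: "'i \<Rightarrow> 'p \<Rightarrow> int" and \<Lambda> :: 'p and Ib :: "'i list set" and n :: nat
  assumes finite_Ib: "finite Ib"
    and Ib_length: "\<rho> \<in> Ib \<Longrightarrow> length \<rho> = n"
    and Ib_subset: "\<rho> \<in> Ib \<Longrightarrow> set \<rho> \<subseteq> I"
    and Ib_distinct: "\<rho> \<in> Ib \<Longrightarrow> distinct \<rho>"
    and Ib_swp: "\<rho> \<in> Ib \<Longrightarrow> Suc b < length \<rho> \<Longrightarrow> swp b \<rho> \<in> Ib"
    and A_off: "x \<in> I \<Longrightarrow> y \<in> I \<Longrightarrow> x \<noteq> y \<Longrightarrow> A x y \<le> 0"
    and A_zero: "x \<in> I \<Longrightarrow> y \<in> I \<Longrightarrow> A x y = 0 \<longleftrightarrow> A y x = 0"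
    and h_nonneg: "x \<in> I \<Longrightarrow> 0 \<le> h x \<Lambda>"
    and t_orth_00: "x \<in> I \<Longrightarrow> y \<in> I \<Longrightarrow> x \<noteq> y \<Longrightarrow> A x y = 0 \<Longrightarrow> t x y 0 0 \<noteq> 0"
    and t_orth_only_00: "x \<in> I \<Longrightarrow> y \<in> I \<Longrightarrow> A x y = 0 \<Longrightarrow> t x y r s \<noteq> 0 \<Longrightarrow> r = 0 \<and> s = 0"
    and t_nonorth_00: "x \<in> I \<Longrightarrow> y \<in> I \<Longrightarrow> A x y \<noteq> 0 \<Longrightarrow> t x y 0 0 = 0"
    and t_sym_00: "x \<in> I \<Longrightarrow> y \<in> I \<Longrightarrow> t x y 0 0 = t y x 0 0"
begin

abbreviation vanishes :: "('i, 'k) fa \<Rightarrow> bool" where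
  "vanishes \<equiv> in_ideal (fa_elem Ib n) (relsR Iodd t Ib n \<union> relsCyc h \<Lambda> Ib n)"

abbreviation wt\<Lambda> :: "'i \<Rightarrow> int" where
  "wt\<Lambda> z \<equiv> h z \<Lambda>"

lemma nth_Ib: "\<rho> \<in> Ib \<Longrightarrow> i < length \<rho> \<Longrightarrow> \<rho> ! i \<in> I"
  using Ib_subset nth_mem by blast

lemma nth_Ib_neq: "\<rho> \<in> Ib \<Longrightarrow> i < length \<rho> \<Longrightarrow> j < length \<rho> \<Longrightarrow> i \<noteq> j \<Longrightarrow> \<rho> ! i \<noteq> \<rho> ! j"
  using Ib_distinct by (simp add: nth_eq_iff_index_eq)

lemma A_off_Ib: "\<rho> \<in> Ib \<Longrightarrow> x \<in> set \<rho> \<Longrightarrow> y \<in> set \<rho> \<Longrightarrow> x \<noteq> y \<Longrightarrow> A x y \<le> 0"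
  using A_off Ib_subset by blast

lemma vanishes_rel: "r \<in> relsR Iodd t Ib n \<Longrightarrow> vanishes r"
  by (rule in_ideal.gen) simp

lemma vanishes_mult_word_left:
  "\<forall>g\<in>set u. valid_gen Ib n g \<Longrightarrow> vanishes f \<Longrightarrow> vanishes (fa_mult (fa_word u) f)"
  by (rule in_ideal.lmult) (auto intro: fa_elem_fa_word)

lemma vanishes_mult_word_right:
  "\<forall>g\<in>set u. valid_gen Ib n g \<Longrightarrow> vanishes f \<Longrightarrow> vanishes (fa_mult f (fa_word u))"
  by (rule in_ideal.rmult) (auto intro: fa_elem_fa_word)

lemma idem_product_vanishes:
  assumes "\<forall>g\<in>set u. valid_gen Ib n g" and "\<nu> \<in> Ib" and "\<rho> \<in> Ib"
  shows "vanishes (\<lambda>w. fa_word (u @ [GE \<nu>, GE \<rho>]) w - (if \<nu> = \<rho> then fa_word (u @ [GE \<rho>]) w else 0))"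
proof -
  let ?r = "fa_lin ([(1, [GE \<nu>, GE \<rho>])] @ (if \<nu> = \<rho> then [(- 1, [GE \<rho>])] else [])) :: ('i, 'k) fa"
  have "vanishes ?r" by (rule vanishes_rel) (unfold relsR_def, intro UnI1, use assms in blast)
  then have "vanishes (fa_mult (fa_word u) ?r)" by (rule vanishes_mult_word_left[OF assms(1)])
  moreover have "fa_mult (fa_word u) ?r =
      (\<lambda>w. fa_word (u @ [GE \<nu>, GE \<rho>]) w - (if \<nu> = \<rho> then fa_word (u @ [GE \<rho>]) w else 0))"
    unfolding fa_mult_word_lin
    by (auto simp: fa_lin_Cons fa_lin_Nil fa_lin_append fa_word_def fun_eq_iff)
  ultimately show ?thesis by simp
qed

lemma cyclotomic_vanishes:
  assumes n0: "0 < n" and \<rho>: "\<rho> \<in> Ib"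
  shows "vanishes (fa_word (replicate (nat (wt\<Lambda> (\<rho> ! 0))) (GX 0) @ [GE \<rho>]))"
proof -
  define X where "X \<nu> = (replicate (nat (wt\<Lambda> (\<nu> ! 0))) (GX 0) :: 'i gen list)" for \<nu> :: "'i list"
  have valid_X: "\<forall>g\<in>set (X \<nu>). valid_gen Ib n g" for \<nu> using n0 by (simp add: X_def valid_gen_def)
  let ?Z = "\<lambda>w. if \<exists>\<nu>\<in>Ib. w = X \<nu> @ [GE \<nu>] then 1 else (0::'k)"
  have Z: "?Z = (\<lambda>w. \<Sum>\<nu>\<in>Ib. fa_word (X \<nu> @ [GE \<nu>]) w)"
    by (rule indicator_eq_sum_fa_word[OF finite_Ib]) (auto simp: inj_on_def)
  let ?S = "\<lambda>w. \<Sum>\<nu>\<in>Ib. fa_word (X \<nu> @ [GE \<nu>, GE \<rho>]) w"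
  have "fa_mult ?Z (fa_word [GE \<rho>]) = ?S"
    unfolding Z fa_mult_sum_left[OF finite_Ib] by (simp add: fa_mult_word_word)
  moreover have "vanishes (fa_mult ?Z (fa_word [GE \<rho>]))"
    by (rule vanishes_mult_word_right) (use \<rho> n0 in \<open>auto simp: valid_gen_def relsCyc_def X_def
        intro: in_ideal.gen\<close>)
  ultimately have S: "vanishes ?S" by simp
  have termwise: "vanishes (\<lambda>w. \<Sum>\<nu>\<in>Ib. fa_word (X \<nu> @ [GE \<nu>, GE \<rho>]) w
      - (if \<nu> = \<rho> then fa_word (X \<nu> @ [GE \<rho>]) w else 0))"
    using idem_product_vanishes[OF valid_X _ \<rho>] by (intro in_ideal_sum[OF finite_Ib])
  have sum_eq: "(\<lambda>w. \<Sum>\<nu>\<in>Ib. fa_word (X \<nu> @ [GE \<nu>, GE \<rho>]) w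
      - (if \<nu> = \<rho> then fa_word (X \<nu> @ [GE \<rho>]) w else 0)) =
      (\<lambda>w. ?S w - fa_word (X \<rho> @ [GE \<rho>]) w)"
    using \<rho> finite_Ib by (simp add: sum_subtractf sum.delta)
  from termwise have "vanishes (\<lambda>w. ?S w - fa_word (X \<rho> @ [GE \<rho>]) w)" unfolding sum_eq .
  from in_ideal_diff[OF S this] have "vanishes (fa_word (X \<rho> @ [GE \<rho>]))" by simp
  then show ?thesis by (simp add: X_def)
qed

lemma Qel_orthogonal:
  assumes "i \<in> I" and "j \<in> I" and "A i j = 0"
  shows "Qel t i j a b \<rho> = (\<lambda>w. t i j 0 0 * fa_word [GE \<rho>] w)"
proof
  fix w
  have "Qel t i j a b \<rho> w =
      (\<Sum>r\<le>length w. \<Sum>s\<le>length w. if r = 0 \<and> s = 0 \<and> w = [GE \<rho>] then t i j 0 0 else 0)"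
    unfolding Qel_def using t_orth_only_00[OF assms] by (intro sum.cong refl) auto
  also have "\<dots> = t i j 0 0 * fa_word [GE \<rho>] w" by (simp add: if_distrib sum.delta fa_word_def)
  finally show "Qel t i j a b \<rho> w = t i j 0 0 * fa_word [GE \<rho>] w" .
qed

text \<open>Across orthogonal neighbours \<open>\<tau>\<^sub>b\<^sup>2 e(\<rho>) = t\<^sub>\<rho>\<^sub>b\<^sub>,\<^sub>\<rho>\<^sub>b\<^sub>+\<^sub>1\<^sub>;\<^sub>(\<^sub>0\<^sub>,\<^sub>0\<^sub>) e(\<rho>)\<close> with an
  invertible scalar, while \<open>\<tau>\<^sub>b e(\<rho>) = e(s\<^sub>b\<rho>) \<tau>\<^sub>b\<close>.\<close>

lemma idem_vanishes_if_swp_orthogonal: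
  assumes \<rho>: "\<rho> \<in> Ib" and b: "Suc b < n" and orth: "A (\<rho> ! b) (\<rho> ! Suc b) = 0"
    and vanish: "vanishes (idem (swp b \<rho>))"
  shows "vanishes (idem \<rho>)"
proof -
  let ?i = "\<rho> ! b" and ?j = "\<rho> ! Suc b"
  have l: "Suc b < length \<rho>" using Ib_length[OF \<rho>] b by simp
  have I: "?i \<in> I" "?j \<in> I" using nth_Ib[OF \<rho>] l by auto
  have valid: "\<forall>g\<in>set [GT b]. valid_gen Ib n g" using b by (simp add: valid_gen_def)
  have "vanishes (\<lambda>w. fa_lin [(1, [GT b, GT b, GE \<rho>])] w - Qel t ?i (\<rho> ! (b+1)) b (b+1) \<rho> w)"
    by (rule vanishes_rel) (use \<rho> b in \<open>unfold relsR_def, blast\<close>)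
  then have square: "vanishes (\<lambda>w. fa_word [GT b, GT b, GE \<rho>] w - t ?i ?j 0 0 * fa_word [GE \<rho>] w)"
    using Qel_orthogonal[OF I orth] by (simp add: fa_lin_Cons fa_lin_Nil fa_word_def)
  have tau_commute: "fa_mult (fa_word [GT b]) (fa_lin [(1, [GT b, GE \<rho>]), (- 1, [GE (swp b \<rho>), GT b])]) =
      (\<lambda>w. fa_word [GT b, GT b, GE \<rho>] w - fa_word [GT b, GE (swp b \<rho>), GT b] w)"
    unfolding fa_mult_word_lin by (auto simp: fa_lin_Cons fa_lin_Nil fa_word_def fun_eq_iff)
  have commute: "vanishes (\<lambda>w. fa_word [GT b, GT b, GE \<rho>] w - fa_word [GT b, GE (swp b \<rho>), GT b] w)"
    unfolding tau_commute[symmetric]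
    by (rule vanishes_mult_word_left[OF valid], rule vanishes_rel) (use \<rho> b in \<open>unfold relsR_def, blast\<close>)
  have "vanishes (fa_mult (fa_mult (fa_word [GT b]) (idem (swp b \<rho>))) (fa_word [GT b]))"
    by (rule vanishes_mult_word_right[OF valid], rule vanishes_mult_word_left[OF valid vanish])
  then have conj: "vanishes (fa_word [GT b, GE (swp b \<rho>), GT b])"
    by (simp add: idem_eq_fa_word fa_mult_word_word)
  have "vanishes (\<lambda>w. (fa_word [GT b, GT b, GE \<rho>] w - fa_word [GT b, GE (swp b \<rho>), GT b] w)
      + fa_word [GT b, GE (swp b \<rho>), GT b] w
      - (fa_word [GT b, GT b, GE \<rho>] w - t ?i ?j 0 0 * fa_word [GE \<rho>] w))"
    by (rule in_ideal_diff[OF in_ideal.add[OF commute conj] square])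
  then have "vanishes (\<lambda>w. t ?i ?j 0 0 * fa_word [GE \<rho>] w)" by simp
  then have "vanishes (\<lambda>w. inverse (t ?i ?j 0 0) * (t ?i ?j 0 0 * fa_word [GE \<rho>] w))"
    by (rule in_ideal.smult)
  moreover have "?i \<noteq> ?j" using nth_Ib_neq[OF \<rho>, of b "Suc b"] l by simp
  then have "t ?i ?j 0 0 \<noteq> 0" by (rule t_orth_00[OF I _ orth])
  then have "(\<lambda>w. inverse (t ?i ?j 0 0) * (t ?i ?j 0 0 * fa_word [GE \<rho>] w)) = idem \<rho>"
    by (simp add: idem_eq_fa_word fun_eq_iff mult.assoc[symmetric])
  ultimately show ?thesis by simp
qed

lemma idem_vanishes_if_moved_front:
  assumes "p @ x # q \<in> Ib" and "\<forall>y\<in>set p. A y x = 0"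
  shows "x # p @ q \<in> Ib" and "vanishes (idem (x # p @ q)) \<Longrightarrow> vanishes (idem (p @ x # q))"
proof -
  have "x # p @ q \<in> Ib \<and> (vanishes (idem (x # p @ q)) \<longrightarrow> vanishes (idem (p @ x # q)))"
    using assms
  proof (induction p arbitrary: q rule: rev_induct)
    case Nil
    then show ?case by simp
  next
    case (snoc y p)
    let ?\<rho> = "p @ y # x # q" and ?b = "length p"
    have \<rho>: "?\<rho> \<in> Ib" using snoc.prems(1) by simp
    have sw: "swp ?b ?\<rho> = p @ x # y # q" by (rule swp_append)
    then have "p @ x # (y # q) \<in> Ib" using Ib_swp[OF \<rho>, of ?b] by simp
    then have IH: "x # p @ y # q \<in> Ib \<and> (vanishes (idem (x # p @ y # q)) \<longrightarrow> vanishes (idem (p @ x # y # q)))"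
      using snoc.IH snoc.prems(2) by simp
    have "Suc ?b < n" using Ib_length[OF \<rho>] by simp
    moreover have "A (?\<rho> ! ?b) (?\<rho> ! Suc ?b) = 0" using snoc.prems(2) by (simp add: nth_append)
    ultimately have "vanishes (idem (p @ x # y # q)) \<Longrightarrow> vanishes (idem ?\<rho>)"
      using idem_vanishes_if_swp_orthogonal[OF \<rho>] sw by simp
    then show ?case using IH by simp
  qed
  then show "x # p @ q \<in> Ib" and "vanishes (idem (x # p @ q)) \<Longrightarrow> vanishes (idem (p @ x # q))"
    by simp_all
qed

lemma idem_vanishes_if_not_admissible:
  assumes \<rho>: "\<rho> \<in> Ib" and "\<not> admissible A wt\<Lambda> \<rho>"
  shows "vanishes (idem \<rho>)"
proof -
  have sI: "set \<rho> \<subseteq> I" using Ib_subset[OF \<rho>] .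
  have "\<forall>z\<in>set \<rho>. 0 \<le> wt\<Lambda> z" using sI h_nonneg by auto
  moreover have "\<forall>x\<in>set \<rho>. \<forall>y\<in>set \<rho>. x \<noteq> y \<longrightarrow> A x y \<le> 0" using A_off_Ib[OF \<rho>] by blast
  ultimately obtain p x q where pxq: "\<rho> = p @ x # q" "wt\<Lambda> x = 0" "\<forall>y\<in>set p. A x y = 0"
    using not_admissible_obtain_zero_weight[OF assms(2) _ Ib_distinct[OF \<rho>]] by blast
  have orth: "\<forall>y\<in>set p. A y x = 0"
  proof
    fix y assume "y \<in> set p"
    then have "y \<in> I" "x \<in> I" and "A x y = 0" using sI pxq by auto
    then show "A y x = 0" using A_zero[of y x] by simp
  qed
  have front: "x # p @ q \<in> Ib" using idem_vanishes_if_moved_front(1) \<rho> pxq(1) orth by simp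
  then have "n \<noteq> 0" using Ib_length[OF front] by simp
  then have "vanishes (idem (x # p @ q))"
    using cyclotomic_vanishes[OF _ front] pxq(2) by (simp add: idem_eq_fa_word)
  then show ?thesis using idem_vanishes_if_moved_front(2) \<rho> pxq(1) orth by simp
qed

end

section \<open>Connectedness of admissible orderings\<close>

definition swap_step :: "'a list set \<Rightarrow> 'a list \<Rightarrow> 'a list \<Rightarrow> bool" where
  "swap_step S a b \<longleftrightarrow> a \<in> S \<and> b \<in> S \<and> (\<exists>c. Suc c < length b \<and> a = swp c b)"

definition (in multfree_datum) admissible_Ib :: "'i list set" where
  "admissible_Ib = {\<rho> \<in> Ib. admissible A wt\<Lambda> \<rho>}"

lemma (in multfree_datum) move_forward:
  assumes "p @ s1 @ x # s2 \<in> admissible_Ib" and "0 < weight_after A wt\<Lambda> p x"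
  shows "(swap_step admissible_Ib)\<^sup>*\<^sup>* (p @ s1 @ x # s2) (p @ x # s1 @ s2)
    \<and> p @ x # s1 @ s2 \<in> admissible_Ib"
  using assms
proof (induction s1 arbitrary: s2 rule: rev_induct)
  case Nil
  then show ?case by simp
next
  case (snoc y s1)
  let ?a0 = "(p @ s1) @ y # x # s2" and ?a1 = "(p @ s1) @ x # y # s2" and ?c = "length (p @ s1)"
  have a0: "?a0 \<in> Ib" "admissible A wt\<Lambda> ?a0" using snoc.prems(1) by (simp_all add: admissible_Ib_def)
  have d: "distinct ?a0" using Ib_distinct[OF a0(1)] .
  have "\<forall>z\<in>set s1. A x z \<le> 0"
  proof
    fix z assume z: "z \<in> set s1"
    moreover have "x \<notin> set s1" using d by simp
    ultimately have "x \<noteq> z" by blast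
    then show "A x z \<le> 0" using A_off_Ib[OF a0(1), of x z] z by simp
  qed
  then have "weight_after A wt\<Lambda> p x \<le> weight_after A wt\<Lambda> (p @ s1) x"
    by (rule weight_after_mono)
  then have "0 < weight_after A wt\<Lambda> (p @ s1) x" using snoc.prems(2) by simp
  moreover have "A y x \<le> 0" using A_off_Ib[OF a0(1), of y x] d by simp
  ultimately have "admissible A wt\<Lambda> ?a1" by (rule admissible_swap_forward[OF a0(2)])
  moreover have "?a1 \<in> Ib" using Ib_swp[OF a0(1), of ?c] swp_append[of "p @ s1"] by simp
  ultimately have a1: "?a1 \<in> admissible_Ib" by (simp add: admissible_Ib_def)
  have "swap_step admissible_Ib ?a0 ?a1"
    unfolding swap_step_def
  proof (intro conjI exI[of _ ?c])
    show "?a0 \<in> admissible_Ib" using snoc.prems(1) by simp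
    show "?a1 \<in> admissible_Ib" by (rule a1)
    show "Suc ?c < length ?a1" by simp
    show "?a0 = swp ?c ?a1" by (rule swp_append[symmetric])
  qed
  moreover have "(swap_step admissible_Ib)\<^sup>*\<^sup>* (p @ s1 @ x # y # s2) (p @ x # s1 @ y # s2)
      \<and> p @ x # s1 @ y # s2 \<in> admissible_Ib"
    using snoc.IH[of "y # s2"] a1 snoc.prems(2) by simp
  ultimately show ?case by (simp add: converse_rtranclp_into_rtranclp)
qed

lemma (in multfree_datum) admissible_swap_connected:
  assumes "p @ \<sigma> \<in> admissible_Ib" and "p @ \<nu> \<in> admissible_Ib" and "set \<sigma> = set \<nu>"
  shows "(swap_step admissible_Ib)\<^sup>*\<^sup>* (p @ \<sigma>) (p @ \<nu>)"
  using assms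
proof (induction \<nu> arbitrary: p \<sigma>)
  case Nil
  then show ?case by simp
next
  case (Cons x \<nu>)
  obtain s1 s2 where \<sigma>: "\<sigma> = s1 @ x # s2" using Cons.prems(3) by (metis list.set_intros(1) split_list)
  have "0 < weight_after A wt\<Lambda> p x"
    using Cons.prems(2) by (simp add: admissible_Ib_def admissible_append)
  moreover have "p @ s1 @ x # s2 \<in> admissible_Ib" using Cons.prems(1) \<sigma> by simp
  ultimately have step: "(swap_step admissible_Ib)\<^sup>*\<^sup>* (p @ s1 @ x # s2) (p @ x # s1 @ s2)"
      and front: "(p @ [x]) @ s1 @ s2 \<in> admissible_Ib"
    using move_forward by simp_all
  have "distinct (p @ \<sigma>)" and "distinct (p @ x # \<nu>)"
    using Cons.prems(1,2) Ib_distinct unfolding admissible_Ib_def by blast+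
  then have "distinct \<sigma>" and "distinct (x # \<nu>)" by simp_all
  then have "x \<notin> set s1 \<union> set s2" and "x \<notin> set \<nu>" using \<sigma> by auto
  then have "set (s1 @ s2) = set \<nu>" using Cons.prems(3) \<sigma> by auto
  then have "(swap_step admissible_Ib)\<^sup>*\<^sup>* ((p @ [x]) @ s1 @ s2) ((p @ [x]) @ \<nu>)"
    using Cons.IH[of "p @ [x]" "s1 @ s2"] front Cons.prems(2) by simp
  then have "(swap_step admissible_Ib)\<^sup>*\<^sup>* (p @ x # s1 @ s2) (p @ x # \<nu>)" by simp
  then show ?case using rtranclp_trans[OF step] \<sigma> by simp
qed

section \<open>Signs for odd transpositions\<close>

definition odd_above :: "'i set \<Rightarrow> ('i \<Rightarrow> nat) \<Rightarrow> 'i \<Rightarrow> 'i list \<Rightarrow> nat" where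
  "odd_above Iodd rk u L = length (filter (\<lambda>l. l \<in> Iodd \<and> rk u < rk l) L)"

fun odd_inversions :: "'i set \<Rightarrow> ('i \<Rightarrow> nat) \<Rightarrow> 'i list \<Rightarrow> nat" where
  "odd_inversions Iodd rk [] = 0"
| "odd_inversions Iodd rk (l # ls) =
    (if l \<in> Iodd then length (filter (\<lambda>m. m \<in> Iodd \<and> rk m < rk l) ls) else 0) + odd_inversions Iodd rk ls"

definition odd_count :: "'i set \<Rightarrow> 'i list \<Rightarrow> nat" where
  "odd_count Iodd L = length (filter (\<lambda>l. l \<in> Iodd) L)"

text \<open>The sign by which \<open>\<tau>\<^sub>b\<close> acts on the basis vector \<open>\<rho>\<close>. Its exponent depends only on the
  prefix of \<open>\<rho>\<close> before position \<open>b\<close> and on the two letters swapped; it is chosen so that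
  far apart \<open>\<tau>\<^sub>a, \<tau>\<^sub>b\<close> anticommute exactly when all four letters are odd
  (\<open>tau_sign_swp_earlier\<close>), while the braid relation holds without a sign (\<open>tau_sign_braid\<close>).\<close>

definition tau_sign_exponent :: "'i set \<Rightarrow> ('i \<Rightarrow> nat) \<Rightarrow> nat \<Rightarrow> 'i list \<Rightarrow> nat" where
  "tau_sign_exponent Iodd rk b \<rho> = odd_inversions Iodd rk (take b \<rho>)
     + odd_above Iodd rk (\<rho> ! b) (take b \<rho>) * odd_above Iodd rk (\<rho> ! Suc b) (take b \<rho>)
     + odd_count Iodd (take b \<rho>)"

definition tau_sign :: "'i set \<Rightarrow> ('i \<Rightarrow> nat) \<Rightarrow> nat \<Rightarrow> 'i list \<Rightarrow> 'k::field" where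
  "tau_sign Iodd rk b \<rho> =
    (if \<rho> ! b \<in> Iodd \<and> \<rho> ! Suc b \<in> Iodd \<and> odd (tau_sign_exponent Iodd rk b \<rho>) then -1 else 1)"

lemma tau_sign_square: "tau_sign Iodd rk b \<rho> * tau_sign Iodd rk b \<rho> = (1::'k::field)"
  by (simp add: tau_sign_def)

lemma tau_sign_nonzero: "tau_sign Iodd rk b \<rho> \<noteq> (0::'k::field)"
  by (simp add: tau_sign_def)

lemma odd_inversions_snoc:
  "odd_inversions Iodd rk (L @ [u]) = odd_inversions Iodd rk L + (if u \<in> Iodd then odd_above Iodd rk u L else 0)"
  by (induction L) (auto simp: odd_above_def)

lemma odd_inversions_swap:
  "odd_inversions Iodd rk (p @ x # y # r) + of_bool (x \<in> Iodd \<and> y \<in> Iodd \<and> rk x < rk y)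
   = odd_inversions Iodd rk (p @ y # x # r) + of_bool (x \<in> Iodd \<and> y \<in> Iodd \<and> rk y < rk x)"
  by (induction p) auto

lemma odd_inversions_swp_parity:
  assumes "Suc a < length L" and "rk (L ! a) \<noteq> rk (L ! Suc a)"
  shows "even (odd_inversions Iodd rk (swp a L)) \<longleftrightarrow>
    (even (odd_inversions Iodd rk L) \<longleftrightarrow> \<not> (L ! a \<in> Iodd \<and> L ! Suc a \<in> Iodd))"
proof -
  let ?x = "L ! a" and ?y = "L ! Suc a"
  have parity: "even j \<longleftrightarrow> (even i \<longleftrightarrow> \<not> P)"
    if "(i::nat) + of_bool (P \<and> c) = j + of_bool (P \<and> d)" and "c \<longleftrightarrow> \<not> d" for i j P c d
    using that by (cases P; cases c) auto
  have eq: "odd_inversions Iodd rk L + of_bool (?x \<in> Iodd \<and> ?y \<in> Iodd \<and> rk ?x < rk ?y)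
      = odd_inversions Iodd rk (swp a L) + of_bool (?x \<in> Iodd \<and> ?y \<in> Iodd \<and> rk ?y < rk ?x)"
    using odd_inversions_swap[of Iodd rk "take a L" ?x ?y "drop (Suc (Suc a)) L"]
    by (simp only: split_at_adjacent[OF assms(1), symmetric] swp_eq[OF assms(1), symmetric])
  show ?thesis
    by (rule parity[where P = "?x \<in> Iodd \<and> ?y \<in> Iodd" and c = "rk ?x < rk ?y" and d = "rk ?y < rk ?x"])
      (use eq assms(2) in auto)
qed

lemma odd_above_swp: "Suc a < length L \<Longrightarrow> odd_above Iodd rk u (swp a L) = odd_above Iodd rk u L"
  by (simp add: odd_above_def length_filter_swp)

lemma odd_count_swp: "Suc a < length L \<Longrightarrow> odd_count Iodd (swp a L) = odd_count Iodd L"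
  by (simp add: odd_count_def length_filter_swp)

lemma tau_sign_swp_same: "Suc b < length \<rho> \<Longrightarrow> tau_sign Iodd rk b (swp b \<rho>) = tau_sign Iodd rk b \<rho>"
  by (auto simp: tau_sign_def tau_sign_exponent_def take_swp_le mult.commute)

lemma tau_sign_swp_later:
  "Suc b < length \<rho> \<Longrightarrow> Suc a < b \<Longrightarrow> tau_sign Iodd rk a (swp b \<rho>) = tau_sign Iodd rk a \<rho>"
  by (simp add: tau_sign_def tau_sign_exponent_def take_swp_le)

lemma tau_sign_swp_earlier:
  assumes "Suc b < length \<rho>" and "Suc a < b" and "rk (\<rho> ! a) \<noteq> rk (\<rho> ! Suc a)"
  shows "tau_sign Iodd rk b (swp a \<rho>) =
    (if \<rho> ! a \<in> Iodd \<and> \<rho> ! Suc a \<in> Iodd \<and> \<rho> ! b \<in> Iodd \<and> \<rho> ! Suc b \<in> Iodd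
     then - tau_sign Iodd rk b \<rho> else (tau_sign Iodd rk b \<rho> :: 'k::field))"
proof -
  let ?L = "take b \<rho>"
  have a: "Suc a < length \<rho>" and la: "Suc a < length ?L" using assms by simp_all
  have take: "take b (swp a \<rho>) = swp a ?L" using take_swp_ge[OF a] assms by simp
  have "even (odd_inversions Iodd rk (swp a ?L)) \<longleftrightarrow>
      (even (odd_inversions Iodd rk ?L) \<longleftrightarrow> \<not> (\<rho> ! a \<in> Iodd \<and> \<rho> ! Suc a \<in> Iodd))"
    using odd_inversions_swp_parity[OF la, of rk Iodd] assms by simp
  moreover have "tau_sign_exponent Iodd rk b (swp a \<rho>) = odd_inversions Iodd rk (swp a ?L)
      + odd_above Iodd rk (\<rho> ! b) ?L * odd_above Iodd rk (\<rho> ! Suc b) ?L + odd_count Iodd ?L"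
    using assms a by (simp add: tau_sign_exponent_def take odd_above_swp[OF la] odd_count_swp[OF la])
  ultimately show ?thesis
    using assms a unfolding tau_sign_def tau_sign_exponent_def by (auto simp: even_add)
qed

lemma tau_sign_exponent_Suc:
  "Suc (Suc b) < length \<rho> \<Longrightarrow> tau_sign_exponent Iodd rk (Suc b) \<rho> =
    (odd_inversions Iodd rk (take b \<rho>) + (if \<rho> ! b \<in> Iodd then odd_above Iodd rk (\<rho> ! b) (take b \<rho>) else 0))
    + (odd_above Iodd rk (\<rho> ! Suc b) (take b \<rho>) + of_bool (\<rho> ! b \<in> Iodd \<and> rk (\<rho> ! Suc b) < rk (\<rho> ! b)))
    * (odd_above Iodd rk (\<rho> ! Suc (Suc b)) (take b \<rho>)
        + of_bool (\<rho> ! b \<in> Iodd \<and> rk (\<rho> ! Suc (Suc b)) < rk (\<rho> ! b)))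
    + (odd_count Iodd (take b \<rho>) + of_bool (\<rho> ! b \<in> Iodd))"
  by (simp add: tau_sign_exponent_def take_Suc_conv_app_nth odd_inversions_snoc odd_above_def odd_count_def)

text \<open>The parity identity behind the braid relation, for three odd-or-even letters of distinct
  rank with \<open>F\<close>, \<open>Oo\<close>, \<open>g\<^sub>i\<close> the data of the common prefix.\<close>

lemma tau_sign_braid_parity:
  fixes F Oo gi gj gk ri rj rk :: nat
  assumes "ri \<noteq> rj" "ri \<noteq> rk" "rj \<noteq> rk"
  shows "(((xb \<and> xc \<and> odd (F + (if xa then gi else 0) + (gj + of_bool (xa \<and> rj < ri)) * (gk + of_bool (xa \<and> rk < ri)) + (Oo + of_bool xa)))
         \<noteq> (xa \<and> xc \<and> odd (F + gi * gk + Oo)))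
         \<noteq> (xa \<and> xb \<and> odd (F + (if xc then gk else 0) + (gi + of_bool (xc \<and> ri < rk)) * (gj + of_bool (xc \<and> rj < rk)) + (Oo + of_bool xc))))
     = (((xa \<and> xb \<and> odd (F + gi * gj + Oo))
         \<noteq> (xa \<and> xc \<and> odd (F + (if xb then gj else 0) + (gi + of_bool (xb \<and> ri < rj)) * (gk + of_bool (xb \<and> rk < rj)) + (Oo + of_bool xb))))
         \<noteq> (xb \<and> xc \<and> odd (F + gj * gk + Oo)))"
  using assms
  apply (cases xa; cases xb; cases xc)
         apply (simp_all)
   apply (cases "ri < rj"; cases "ri < rk"; cases "rj < rk"; simp add: even_add even_mult_iff)
  apply auto
  done

lemma sign_product3:
  "(if P1 then -1 else 1) * (if P2 then -1 else 1) * (if P3 then -1 else 1) =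
    (if (P1 \<noteq> P2) \<noteq> P3 then -1 else (1::'k::field))"
  by (cases P1; cases P2; cases P3) auto

lemma tau_sign_Suc:
  assumes "Suc (Suc a) < length \<sigma>"
  shows "tau_sign Iodd rk (Suc a) \<sigma> =
    (if \<sigma> ! Suc a \<in> Iodd \<and> \<sigma> ! Suc (Suc a) \<in> Iodd \<and>
       odd (odd_inversions Iodd rk (take a \<sigma>)
        + (if \<sigma> ! a \<in> Iodd then odd_above Iodd rk (\<sigma> ! a) (take a \<sigma>) else 0)
        + (odd_above Iodd rk (\<sigma> ! Suc a) (take a \<sigma>) + of_bool (\<sigma> ! a \<in> Iodd \<and> rk (\<sigma> ! Suc a) < rk (\<sigma> ! a)))
        * (odd_above Iodd rk (\<sigma> ! Suc (Suc a)) (take a \<sigma>)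
            + of_bool (\<sigma> ! a \<in> Iodd \<and> rk (\<sigma> ! Suc (Suc a)) < rk (\<sigma> ! a)))
        + (odd_count Iodd (take a \<sigma>) + of_bool (\<sigma> ! a \<in> Iodd)))
     then -1 else (1::'k::field))"
  using tau_sign_exponent_Suc[OF assms] by (simp add: tau_sign_def)

lemma tau_sign_braid:
  assumes a: "Suc (Suc a) < length \<rho>"
    and rk: "rk (\<rho> ! a) \<noteq> rk (\<rho> ! Suc a)" "rk (\<rho> ! a) \<noteq> rk (\<rho> ! Suc (Suc a))"
      "rk (\<rho> ! Suc a) \<noteq> rk (\<rho> ! Suc (Suc a))"
  shows "tau_sign Iodd rk (Suc a) (swp a (swp (Suc a) \<rho>)) * tau_sign Iodd rk a (swp (Suc a) \<rho>)
      * tau_sign Iodd rk (Suc a) \<rho> =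
    tau_sign Iodd rk a (swp (Suc a) (swp a \<rho>)) * tau_sign Iodd rk (Suc a) (swp a \<rho>)
      * (tau_sign Iodd rk a \<rho> :: 'k::field)"
proof -
  let ?i = "\<rho> ! a" and ?j = "\<rho> ! Suc a" and ?k = "\<rho> ! Suc (Suc a)" and ?L = "take a \<rho>"
  define n1 where "n1 = swp (Suc a) \<rho>"
  define n2 where "n2 = swp a n1"
  define m1 where "m1 = swp a \<rho>"
  define m2 where "m2 = swp (Suc a) m1"
  have len: "length n1 = length \<rho>" "length n2 = length \<rho>" "length m1 = length \<rho>" "length m2 = length \<rho>"
    by (simp_all add: n1_def n2_def m1_def m2_def)
  have n1: "n1 ! a = ?i" "n1 ! Suc a = ?k" using a by (auto simp: n1_def)
  have n2: "n2 ! a = ?k" "n2 ! Suc a = ?i" "n2 ! Suc (Suc a) = ?j" using a n1 len by (auto simp: n2_def n1_def)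
  have m1: "m1 ! a = ?j" "m1 ! Suc a = ?i" "m1 ! Suc (Suc a) = ?k" using a by (auto simp: m1_def)
  have m2: "m2 ! a = ?j" "m2 ! Suc a = ?k" using a m1 len by (auto simp: m2_def m1_def)
  have take: "take a n1 = ?L" "take a n2 = ?L" "take a m1 = ?L" "take a m2 = ?L"
    using a len by (simp_all add: n1_def n2_def m1_def m2_def take_swp_le)
  let ?F = "odd_inversions Iodd rk ?L" and ?O = "odd_count Iodd ?L"
  let ?gi = "odd_above Iodd rk ?i ?L" and ?gj = "odd_above Iodd rk ?j ?L" and ?gk = "odd_above Iodd rk ?k ?L"
  have l: "Suc (Suc a) < length n2" "Suc (Suc a) < length m1" using a len by simp_all
  note E1 = tau_sign_Suc[OF a]
  note E3 = tau_sign_Suc[OF l(1), unfolded n2 take]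
  note E5 = tau_sign_Suc[OF l(2), unfolded m1 take]
  have E2: "tau_sign Iodd rk a n1 = (if ?i \<in> Iodd \<and> ?k \<in> Iodd \<and> odd (?F + ?gi * ?gk + ?O) then -1 else (1::'k))"
    and E4: "tau_sign Iodd rk a \<rho> = (if ?i \<in> Iodd \<and> ?j \<in> Iodd \<and> odd (?F + ?gi * ?gj + ?O) then -1 else (1::'k))"
    and E6: "tau_sign Iodd rk a m2 = (if ?j \<in> Iodd \<and> ?k \<in> Iodd \<and> odd (?F + ?gj * ?gk + ?O) then -1 else (1::'k))"
    by (simp_all add: tau_sign_def tau_sign_exponent_def take n1 m2)
  have "tau_sign Iodd rk (Suc a) \<rho> * tau_sign Iodd rk a n1 * tau_sign Iodd rk (Suc a) n2 =
      tau_sign Iodd rk a \<rho> * tau_sign Iodd rk (Suc a) m1 * (tau_sign Iodd rk a m2 :: 'k)"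
    unfolding E1 E2 E3 E4 E5 E6 sign_product3
    unfolding tau_sign_braid_parity[OF rk, where xa = "?i \<in> Iodd" and xb = "?j \<in> Iodd" and xc = "?k \<in> Iodd"
        and F = ?F and Oo = ?O and gi = ?gi and gj = ?gj and gk = ?gk]
    by (rule refl)
  then show ?thesis by (simp add: n1_def n2_def m1_def m2_def mult_ac)
qed

section \<open>A representation on admissible orderings\<close>

text \<open>The module has basis \<open>S\<close>; all \<open>x\<^sub>p\<close> act by zero, \<open>e(\<nu>)\<close> projects onto \<open>\<nu>\<close>, and
  \<open>\<tau>\<^sub>b\<close> sends \<open>\<rho>\<close> to \<open>tau_coeff b \<rho> \<cdot> s\<^sub>b\<rho>\<close>. The swap is allowed across orthogonal
  neighbours and across the single ordered pair \<open>(X, Y)\<close>; the latter kills \<open>\<tau>\<^sub>b\<^sup>2\<close>, as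
  \<open>Q\<^sub>X\<^sub>Y(0, 0) = 0\<close> when \<open>X\<close> and \<open>Y\<close> are not orthogonal, while across an orthogonal pair
  \<open>tau_scalar\<close> puts the factor \<open>t\<^sub>x\<^sub>,\<^sub>y\<^sub>;\<^sub>(\<^sub>0\<^sub>,\<^sub>0\<^sub>)\<close> on one of the two directions so that
  \<open>\<tau>\<^sub>b\<^sup>2\<close> acts by it. Since a word containing some
  \<open>x\<^sub>p\<close> acts by zero, the matrix coefficient \<open>rep_coeff f \<sigma>' \<sigma>\<close> of an element \<open>f\<close> of the free
  algebra only involves its finitely many \<open>x\<close>-free words.\<close>

definition x_free :: "'i gen list \<Rightarrow> bool" where
  "x_free w \<longleftrightarrow> (\<forall>p. GX p \<notin> set w)"

definition x_free_support :: "('i, 'k::field) fa \<Rightarrow> 'i gen list set" where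
  "x_free_support f = {w. f w \<noteq> 0 \<and> x_free w}"

lemma x_free_simps [simp]:
  "x_free []" "x_free (g # w) \<longleftrightarrow> (\<forall>p. g \<noteq> GX p) \<and> x_free w" "x_free (u @ v) \<longleftrightarrow> x_free u \<and> x_free v"
  by (auto simp: x_free_def)

lemma x_free_take: "x_free w \<Longrightarrow> x_free (take i w)"
  by (auto simp: x_free_def dest: in_set_takeD)

lemma x_free_drop: "x_free w \<Longrightarrow> x_free (drop i w)"
  by (auto simp: x_free_def dest: in_set_dropD)

lemma x_free_replicate [simp]: "x_free (replicate r (GX p)) \<longleftrightarrow> r = 0"
  by (cases r) auto

definition tau_allowed :: "('i \<Rightarrow> 'i \<Rightarrow> int) \<Rightarrow> 'i \<Rightarrow> 'i \<Rightarrow> 'i \<Rightarrow> 'i \<Rightarrow> bool" where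
  "tau_allowed A X Y x y \<longleftrightarrow> A x y = 0 \<or> (x = X \<and> y = Y)"

definition tau_scalar :: "('i \<Rightarrow> 'i \<Rightarrow> int) \<Rightarrow> ('i \<Rightarrow> 'i \<Rightarrow> nat \<Rightarrow> nat \<Rightarrow> 'k::field) \<Rightarrow> ('i \<Rightarrow> nat) \<Rightarrow> 'i \<Rightarrow> 'i \<Rightarrow> 'k" where
  "tau_scalar A t rk x y = (if A x y = 0 \<and> rk y < rk x then t x y 0 0 else 1)"

locale tau_module = multfree_datum I Iodd A t h \<Lambda> Ib n
  for I Iodd :: "'i set" and A :: "'i \<Rightarrow> 'i \<Rightarrow> int" and t :: "'i \<Rightarrow> 'i \<Rightarrow> nat \<Rightarrow> nat \<Rightarrow> 'k::field"
    and h :: "'i \<Rightarrow> 'p \<Rightarrow> int" and \<Lambda> :: 'p and Ib :: "'i list set" and n :: nat +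
  fixes S :: "'i list set" and rk :: "'i \<Rightarrow> nat" and X Y :: 'i
  assumes S_subset: "S \<subseteq> Ib"
    and S_swp_orthogonal: "\<rho> \<in> S \<Longrightarrow> Suc b < n \<Longrightarrow> A (\<rho> ! b) (\<rho> ! Suc b) = 0 \<Longrightarrow> swp b \<rho> \<in> S"
    and S_first_weight: "\<rho> \<in> S \<Longrightarrow> 0 < n \<Longrightarrow> 0 < h (\<rho> ! 0) \<Lambda>"
    and rk_inj: "\<rho> \<in> S \<Longrightarrow> inj_on rk (set \<rho>)"
begin

lemma S_len: "\<rho> \<in> S \<Longrightarrow> length \<rho> = n"
  using S_subset Ib_length by blast

lemma S_I: "\<rho> \<in> S \<Longrightarrow> set \<rho> \<subseteq> I"
  using S_subset Ib_subset by blast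

lemma finite_S: "finite S" using finite_Ib S_subset finite_subset by blast

definition tau_coeff :: "nat \<Rightarrow> 'i list \<Rightarrow> 'k" where
  "tau_coeff b \<rho> = (if \<rho> \<in> S \<and> swp b \<rho> \<in> S \<and> Suc b < length \<rho> \<and> tau_allowed A X Y (\<rho> ! b) (\<rho> ! Suc b)
     then tau_sign Iodd rk b \<rho> * tau_scalar A t rk (\<rho> ! b) (\<rho> ! Suc b) else 0)"

fun gen_action :: "'i gen \<Rightarrow> 'i list \<Rightarrow> 'k \<times> 'i list" where
  "gen_action (GE \<nu>) \<rho> = (if \<rho> = \<nu> then 1 else 0, \<rho>)"
| "gen_action (GX p) \<rho> = (0, \<rho>)"
| "gen_action (GT b) \<rho> = (tau_coeff b \<rho>, swp b \<rho>)"

fun word_action :: "'i gen list \<Rightarrow> 'i list \<Rightarrow> 'k \<times> 'i list" where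
  "word_action [] \<rho> = (1, \<rho>)"
| "word_action (g # w) \<rho> =
    (fst (gen_action g (snd (word_action w \<rho>))) * fst (word_action w \<rho>), snd (gen_action g (snd (word_action w \<rho>))))"

definition word_coeff :: "'i gen list \<Rightarrow> 'i list \<Rightarrow> 'i list \<Rightarrow> 'k" where
  "word_coeff w \<sigma>' \<sigma> = (if \<sigma> \<in> S \<and> snd (word_action w \<sigma>) = \<sigma>' then fst (word_action w \<sigma>) else 0)"

definition rep_coeff :: "('i, 'k) fa \<Rightarrow> 'i list \<Rightarrow> 'i list \<Rightarrow> 'k" where
  "rep_coeff f \<sigma>' \<sigma> = (\<Sum>w\<in>x_free_support f. f w * word_coeff w \<sigma>' \<sigma>)"

lemma word_action_append:
  "word_action (u @ v) \<rho> =
    (fst (word_action u (snd (word_action v \<rho>))) * fst (word_action v \<rho>), snd (word_action u (snd (word_action v \<rho>))))"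
  by (induction u) auto

lemma gen_action_S: "\<rho> \<in> S \<Longrightarrow> fst (gen_action g \<rho>) \<noteq> 0 \<Longrightarrow> snd (gen_action g \<rho>) \<in> S"
  by (cases g) (auto simp: tau_coeff_def split: if_splits)

lemma word_action_S: "\<rho> \<in> S \<Longrightarrow> fst (word_action w \<rho>) \<noteq> 0 \<Longrightarrow> snd (word_action w \<rho>) \<in> S"
  by (induction w) (auto intro: gen_action_S)

lemma word_action_not_x_free: "\<not> x_free w \<Longrightarrow> fst (word_action w \<rho>) = 0"
proof (induction w)
  case Nil then show ?case by simp
next
  case (Cons g w)
  then show ?case by (cases g) auto
qed

lemma word_coeff_not_x_free [simp]: "\<not> x_free w \<Longrightarrow> word_coeff w \<sigma>' \<sigma> = 0"
  by (simp add: word_coeff_def word_action_not_x_free)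

lemma word_coeff_append: "word_coeff (u @ v) \<sigma>'' \<sigma> = (\<Sum>\<rho>\<in>S. word_coeff u \<sigma>'' \<rho> * word_coeff v \<rho> \<sigma>)"
proof (cases "\<sigma> \<in> S")
  case False then show ?thesis by (simp add: word_coeff_def)
next
  case True
  show ?thesis
  proof (cases "fst (word_action v \<sigma>) = 0")
    case z: True
    have "(\<Sum>\<rho>\<in>S. word_coeff u \<sigma>'' \<rho> * word_coeff v \<rho> \<sigma>) = 0"
      by (rule sum.neutral) (simp add: word_coeff_def z)
    then show ?thesis by (simp add: word_coeff_def word_action_append z)
  next
    case nz: False
    then have inS: "snd (word_action v \<sigma>) \<in> S" using word_action_S True by blast
    have "(\<Sum>\<rho>\<in>S. word_coeff u \<sigma>'' \<rho> * word_coeff v \<rho> \<sigma>) =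
          (\<Sum>\<rho>\<in>S. if \<rho> = snd (word_action v \<sigma>) then word_coeff u \<sigma>'' \<rho> * fst (word_action v \<sigma>) else 0)"
      by (rule sum.cong) (auto simp: word_coeff_def True)
    also have "\<dots> = word_coeff u \<sigma>'' (snd (word_action v \<sigma>)) * fst (word_action v \<sigma>)"
      using inS finite_S by simp
    finally show ?thesis using True inS by (simp add: word_coeff_def word_action_append)
  qed
qed

lemma rep_coeff_eq: "finite F \<Longrightarrow> x_free_support f \<subseteq> F \<Longrightarrow> rep_coeff f \<sigma>' \<sigma> = (\<Sum>w\<in>F. f w * word_coeff w \<sigma>' \<sigma>)"
  unfolding rep_coeff_def
  by (rule sum.mono_neutral_left) (use word_coeff_not_x_free in \<open>fastforce simp: x_free_support_def\<close>)+

lemma rep_coeff_add: "finite (x_free_support f) \<Longrightarrow> finite (x_free_support g) \<Longrightarrow>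
   finite (x_free_support (\<lambda>w. f w + g w)) \<and> rep_coeff (\<lambda>w. f w + g w) \<sigma>' \<sigma> = rep_coeff f \<sigma>' \<sigma> + rep_coeff g \<sigma>' \<sigma>"
proof -
  assume ff: "finite (x_free_support f)" and fg: "finite (x_free_support g)"
  let ?F = "x_free_support f \<union> x_free_support g"
  have sub: "x_free_support (\<lambda>w. f w + g w) \<subseteq> ?F" by (auto simp: x_free_support_def)
  have fin: "finite ?F" using ff fg by simp
  have "rep_coeff (\<lambda>w. f w + g w) \<sigma>' \<sigma> = (\<Sum>w\<in>?F. (f w + g w) * word_coeff w \<sigma>' \<sigma>)"
    by (rule rep_coeff_eq[OF fin sub])
  also have "\<dots> = (\<Sum>w\<in>?F. f w * word_coeff w \<sigma>' \<sigma>) + (\<Sum>w\<in>?F. g w * word_coeff w \<sigma>' \<sigma>)"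
    by (simp add: distrib_right sum.distrib)
  also have "\<dots> = rep_coeff f \<sigma>' \<sigma> + rep_coeff g \<sigma>' \<sigma>"
    using rep_coeff_eq[OF fin, of f] rep_coeff_eq[OF fin, of g] by auto
  finally show ?thesis using finite_subset[OF sub fin] by simp
qed

lemma rep_coeff_smult: "finite (x_free_support f) \<Longrightarrow>
   finite (x_free_support (\<lambda>w. c * f w)) \<and> rep_coeff (\<lambda>w. c * f w) \<sigma>' \<sigma> = c * rep_coeff f \<sigma>' \<sigma>"
proof -
  assume ff: "finite (x_free_support f)"
  have sub: "x_free_support (\<lambda>w. c * f w) \<subseteq> x_free_support f" by (auto simp: x_free_support_def)
  have "rep_coeff (\<lambda>w. c * f w) \<sigma>' \<sigma> = (\<Sum>w\<in>x_free_support f. (c * f w) * word_coeff w \<sigma>' \<sigma>)"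
    by (rule rep_coeff_eq[OF ff sub])
  also have "\<dots> = c * rep_coeff f \<sigma>' \<sigma>" by (simp add: rep_coeff_def sum_distrib_left mult.assoc)
  finally show ?thesis using finite_subset[OF sub ff] by simp
qed

lemma rep_coeff_zero: "finite (x_free_support (\<lambda>w. 0 :: 'k)) \<and> rep_coeff (\<lambda>w. 0) \<sigma>' \<sigma> = 0"
  by (simp add: x_free_support_def rep_coeff_def)

lemma rep_coeff_fa_word: "finite (x_free_support (fa_word u :: ('i,'k) fa)) \<and> rep_coeff (fa_word u) \<sigma>' \<sigma> = word_coeff u \<sigma>' \<sigma>"
proof -
  have sub: "x_free_support (fa_word u :: ('i,'k) fa) \<subseteq> {u}" by (auto simp: x_free_support_def fa_word_def split: if_splits)
  have "rep_coeff (fa_word u) \<sigma>' \<sigma> = (\<Sum>w\<in>{u}. fa_word u w * word_coeff w \<sigma>' \<sigma>)" by (rule rep_coeff_eq) (use sub in auto)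
  then show ?thesis using finite_subset[OF sub] by (simp add: fa_word_def)
qed

lemma rep_coeff_fa_lin: "finite (x_free_support (fa_lin xs :: ('i,'k) fa)) \<and>
   rep_coeff (fa_lin xs) \<sigma>' \<sigma> = sum_list (map (\<lambda>(c,u). c * word_coeff u \<sigma>' \<sigma>) xs)"
proof (induction xs)
  case Nil then show ?case using rep_coeff_zero by (simp add: fa_lin_Nil)
next
  case (Cons p xs)
  obtain c u where p: "p = (c,u)" by (cases p)
  have e: "fa_lin (p # xs) = (\<lambda>w. c * fa_word u w + fa_lin xs w)"
    by (auto simp: p fa_lin_Cons fa_word_def fun_eq_iff)
  have i: "finite (x_free_support (\<lambda>w. c * fa_word u w :: 'k))" "rep_coeff (\<lambda>w. c * fa_word u w) \<sigma>' \<sigma> = c * word_coeff u \<sigma>' \<sigma>"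
    using rep_coeff_smult[of "fa_word u" c] rep_coeff_fa_word[of u] by auto
  show ?case unfolding e using rep_coeff_add[OF i(1) Cons.IH[THEN conjunct1]] i Cons.IH by (simp add: p)
qed

lemma rep_coeff_sum: "finite B \<Longrightarrow> (\<And>x. x \<in> B \<Longrightarrow> finite (x_free_support (F x))) \<Longrightarrow>
   finite (x_free_support (\<lambda>w. \<Sum>x\<in>B. F x w)) \<and> rep_coeff (\<lambda>w. \<Sum>x\<in>B. F x w) \<sigma>' \<sigma> = (\<Sum>x\<in>B. rep_coeff (F x) \<sigma>' \<sigma>)"
proof (induction B rule: finite_induct)
  case empty then show ?case using rep_coeff_zero by simp
next
  case (insert a B)
  have h1: "finite (x_free_support (F a))" using insert by auto
  have h2: "finite (x_free_support (\<lambda>w. \<Sum>x\<in>B. F x w))" "rep_coeff (\<lambda>w. \<Sum>x\<in>B. F x w) \<sigma>' \<sigma> = (\<Sum>x\<in>B. rep_coeff (F x) \<sigma>' \<sigma>)"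
    using insert by auto
  have e: "(\<lambda>w. \<Sum>x\<in>insert a B. F x w) = (\<lambda>w. F a w + (\<Sum>x\<in>B. F x w))"
    using insert by simp
  show ?case unfolding e using rep_coeff_add[OF h1 h2(1)] h2(2) insert by simp
qed

lemma fa_mult_x_free:
  assumes "x_free w"
  shows "fa_mult f g w = (\<Sum>p\<in>{p \<in> x_free_support f \<times> x_free_support g. fst p @ snd p = w}. f (fst p) * g (snd p))"
proof -
  let ?P = "{p \<in> x_free_support f \<times> x_free_support g. fst p @ snd p = w}"
  let ?K = "{i \<in> {..length w}. take i w \<in> x_free_support f \<and> drop i w \<in> x_free_support g}"
  have "fa_mult f g w = (\<Sum>i\<in>?K. f (take i w) * g (drop i w))"
    unfolding fa_mult_def
    by (rule sum.mono_neutral_right) (auto simp: x_free_support_def x_free_take x_free_drop assms)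
  also have "\<dots> = (\<Sum>p\<in>?P. f (fst p) * g (snd p))"
  proof (rule sum.reindex_bij_witness[where i = "\<lambda>p. length (fst p)" and j = "\<lambda>i. (take i w, drop i w)"])
    show "\<And>a. a \<in> ?P \<Longrightarrow> (take (length (fst a)) w, drop (length (fst a)) w) = a" by auto
    show "\<And>a. a \<in> ?P \<Longrightarrow> length (fst a) \<in> ?K" by auto
    show "\<And>i. i \<in> ?K \<Longrightarrow> length (fst (take i w, drop i w)) = i" by auto
    show "\<And>i. i \<in> ?K \<Longrightarrow> (take i w, drop i w) \<in> ?P" by auto
    show "\<And>i. i \<in> ?K \<Longrightarrow> f (fst (take i w, drop i w)) * g (snd (take i w, drop i w)) = f (take i w) * g (drop i w)"
      by simp
  qed
  finally show ?thesis .
qed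

lemma rep_coeff_mult:
  assumes ff: "finite (x_free_support f)" and fg: "finite (x_free_support g)"
  shows "finite (x_free_support (fa_mult f g)) \<and> rep_coeff (fa_mult f g) \<sigma>'' \<sigma> = (\<Sum>\<rho>\<in>S. rep_coeff f \<sigma>'' \<rho> * rep_coeff g \<rho> \<sigma>)"
proof -
  let ?AB = "(\<lambda>p. fst p @ snd p) ` (x_free_support f \<times> x_free_support g)"
  have finAB: "finite ?AB" using ff fg by simp
  have sub: "x_free_support (fa_mult f g) \<subseteq> ?AB"
  proof
    fix w assume w: "w \<in> x_free_support (fa_mult f g)"
    then have xw: "x_free w" and nz: "fa_mult f g w \<noteq> 0" by (auto simp: x_free_support_def)
    have "{p \<in> x_free_support f \<times> x_free_support g. fst p @ snd p = w} \<noteq> {}"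
    proof
      assume e: "{p \<in> x_free_support f \<times> x_free_support g. fst p @ snd p = w} = {}"
      have "fa_mult f g w = 0" unfolding fa_mult_x_free[OF xw, of f g] e by simp
      then show False using nz by simp
    qed
    then obtain p where "p \<in> x_free_support f \<times> x_free_support g" "fst p @ snd p = w" by blast
    then show "w \<in> ?AB" by force
  qed
  have "rep_coeff (fa_mult f g) \<sigma>'' \<sigma> = (\<Sum>w\<in>?AB. fa_mult f g w * word_coeff w \<sigma>'' \<sigma>)"
    by (rule rep_coeff_eq[OF finAB sub])
  also have "\<dots> = (\<Sum>w\<in>?AB. \<Sum>p\<in>{p \<in> x_free_support f \<times> x_free_support g. fst p @ snd p = w}. f (fst p) * g (snd p) * word_coeff (fst p @ snd p) \<sigma>'' \<sigma>)"
  proof (rule sum.cong[OF refl])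
    fix w assume "w \<in> ?AB"
    then have "x_free w" by (auto simp: x_free_support_def)
    then show "fa_mult f g w * word_coeff w \<sigma>'' \<sigma> = (\<Sum>p\<in>{p \<in> x_free_support f \<times> x_free_support g. fst p @ snd p = w}. f (fst p) * g (snd p) * word_coeff (fst p @ snd p) \<sigma>'' \<sigma>)"
      by (simp add: fa_mult_x_free sum_distrib_right)
  qed
  also have "\<dots> = (\<Sum>p\<in>x_free_support f \<times> x_free_support g. f (fst p) * g (snd p) * word_coeff (fst p @ snd p) \<sigma>'' \<sigma>)"
    by (rule sum.group) (use ff fg in auto)
  also have "\<dots> = (\<Sum>p\<in>x_free_support f \<times> x_free_support g. \<Sum>\<rho>\<in>S. (f (fst p) * word_coeff (fst p) \<sigma>'' \<rho>) * (g (snd p) * word_coeff (snd p) \<rho> \<sigma>))"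
    by (rule sum.cong[OF refl]) (simp add: word_coeff_append sum_distrib_left mult_ac)
  also have "\<dots> = (\<Sum>\<rho>\<in>S. \<Sum>p\<in>x_free_support f \<times> x_free_support g. (f (fst p) * word_coeff (fst p) \<sigma>'' \<rho>) * (g (snd p) * word_coeff (snd p) \<rho> \<sigma>))"
    by (rule sum.swap)
  also have "\<dots> = (\<Sum>\<rho>\<in>S. rep_coeff f \<sigma>'' \<rho> * rep_coeff g \<rho> \<sigma>)"
    by (rule sum.cong[OF refl]) (simp add: rep_coeff_def sum_product sum.cartesian_product case_prod_beta)
  finally show ?thesis using finite_subset[OF sub finAB] by simp
qed


lemma S_neq: "\<rho> \<in> S \<Longrightarrow> i < length \<rho> \<Longrightarrow> j < length \<rho> \<Longrightarrow> i \<noteq> j \<Longrightarrow> \<rho> ! i \<noteq> \<rho> ! j"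
  using S_subset nth_Ib_neq by blast

lemma S_rk: "\<rho> \<in> S \<Longrightarrow> i < length \<rho> \<Longrightarrow> j < length \<rho> \<Longrightarrow> i \<noteq> j \<Longrightarrow> rk (\<rho> ! i) \<noteq> rk (\<rho> ! j)"
proof
  assume r: "\<rho> \<in> S" and ij: "i < length \<rho>" "j < length \<rho>" "i \<noteq> j" and e: "rk (\<rho> ! i) = rk (\<rho> ! j)"
  have "\<rho> ! i = \<rho> ! j" using inj_onD[OF rk_inj[OF r] e] ij by simp
  then show False using S_neq[OF r ij] by simp
qed

lemma S_nth_in_I: "\<rho> \<in> S \<Longrightarrow> i < length \<rho> \<Longrightarrow> \<rho> ! i \<in> I"
  using S_I nth_mem by blast

lemma swp_in_S_iff:
  assumes b: "Suc b < length \<sigma>" and sI: "set \<sigma> \<subseteq> I" and z0: "A (\<sigma> ! b) (\<sigma> ! Suc b) = 0 \<or> A (\<sigma> ! Suc b) (\<sigma> ! b) = 0"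
  shows "swp b \<sigma> \<in> S \<longleftrightarrow> \<sigma> \<in> S"
proof -
  have b0: "b < length \<sigma>" using b by simp
  have I1: "\<sigma> ! b \<in> I" using nth_mem[OF b0] sI by blast
  have I2: "\<sigma> ! Suc b \<in> I" using nth_mem[OF b] sI by blast
  have z1: "A (\<sigma> ! b) (\<sigma> ! Suc b) = 0" using z0 A_zero[OF I1 I2] by blast
  have z2: "A (\<sigma> ! Suc b) (\<sigma> ! b) = 0" using z0 A_zero[OF I1 I2] by blast
  show ?thesis
  proof
    assume s: "swp b \<sigma> \<in> S"
    have l: "Suc b < n" using S_len[OF s] b by simp
    have "A (swp b \<sigma> ! b) (swp b \<sigma> ! Suc b) = 0" using b z2 by simp
    then have "swp b (swp b \<sigma>) \<in> S" by (rule S_swp_orthogonal[OF s l])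
    then show "\<sigma> \<in> S" using b by simp
  next
    assume s: "\<sigma> \<in> S"
    have l: "Suc b < n" using S_len[OF s] b by simp
    show "swp b \<sigma> \<in> S" by (rule S_swp_orthogonal[OF s l z1])
  qed
qed

lemma tau_coeff_eq: "Suc b < length \<rho> \<Longrightarrow> tau_coeff b \<rho> = (if \<rho> \<in> S \<and> swp b \<rho> \<in> S \<and> tau_allowed A X Y (\<rho> ! b) (\<rho> ! Suc b)
     then tau_sign Iodd rk b \<rho> * tau_scalar A t rk (\<rho> ! b) (\<rho> ! Suc b) else 0)"
  by (simp add: tau_coeff_def)

lemma tau_coeff_square:
  assumes r: "\<rho> \<in> S" and b: "Suc b < length \<rho>"
  shows "tau_coeff b (swp b \<rho>) * tau_coeff b \<rho> = t (\<rho> ! b) (\<rho> ! Suc b) 0 0"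
proof -
  let ?x = "\<rho> ! b" and ?y = "\<rho> ! Suc b"
  have I: "?x \<in> I" "?y \<in> I" using S_nth_in_I r b by auto
  have ne: "?x \<noteq> ?y" using S_neq[OF r] b by auto
  have rne: "rk ?x \<noteq> rk ?y" using S_rk[OF r] b by auto
  show ?thesis
  proof (cases "A ?x ?y = 0")
    case True
    then have T2: "A ?y ?x = 0" using A_zero I by auto
    have s: "swp b \<rho> \<in> S" using S_swp_orthogonal[OF r] S_len[OF r] b True by auto
    have e: "tau_sign Iodd rk b (swp b \<rho>) * tau_sign Iodd rk b \<rho> = (1::'k)"
      by (simp only: tau_sign_swp_same[OF b] tau_sign_square)
    have k: "tau_scalar A t rk ?y ?x * tau_scalar A t rk ?x ?y = t ?x ?y 0 0"
      using rne True T2 t_sym_00[OF I] by (auto simp: tau_scalar_def)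
    have c1: "tau_coeff b \<rho> = tau_sign Iodd rk b \<rho> * tau_scalar A t rk ?x ?y"
      using b r s True by (simp add: tau_coeff_eq tau_allowed_def)
    have c2: "tau_coeff b (swp b \<rho>) = tau_sign Iodd rk b (swp b \<rho>) * tau_scalar A t rk ?y ?x"
      by (subst tau_coeff_eq) (use b r s T2 in \<open>simp_all add: tau_allowed_def\<close>)
    have "tau_coeff b (swp b \<rho>) * tau_coeff b \<rho> = (tau_sign Iodd rk b (swp b \<rho>) * tau_sign Iodd rk b \<rho>) * (tau_scalar A t rk ?y ?x * tau_scalar A t rk ?x ?y)"
      unfolding c1 c2 by (simp only: mult_ac)
    then show ?thesis using e k by simp
  next
    case False
    then have F2: "A ?y ?x \<noteq> 0" using A_zero I by auto
    have t0: "t ?x ?y 0 0 = 0" using t_nonorth_00 I False by auto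
    have "\<not> (tau_allowed A X Y ?x ?y \<and> tau_allowed A X Y ?y ?x)"
      using False F2 ne by (auto simp: tau_allowed_def)
    then have "tau_coeff b (swp b \<rho>) = 0 \<or> tau_coeff b \<rho> = 0" using b by (auto simp: tau_coeff_eq)
    then show ?thesis using t0 by auto
  qed
qed


lemma swp_commute_in_S:
  assumes r: "\<rho> \<in> S" and ab: "Suc a < b" and b: "Suc b < length \<rho>"
    and allowed: "tau_allowed A X Y (\<rho> ! a) (\<rho> ! Suc a)" "tau_allowed A X Y (\<rho> ! b) (\<rho> ! Suc b)"
    and both: "swp a (swp b \<rho>) \<in> S"
  shows "swp b \<rho> \<in> S" and "swp a \<rho> \<in> S"
proof -
  have a: "Suc a < length \<rho>" using ab b by simp
  have sI: "set \<rho> \<subseteq> I" using S_I[OF r] .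
  have "\<rho> ! a \<noteq> \<rho> ! b" using S_neq[OF r] ab b by simp
  then have "A (\<rho> ! a) (\<rho> ! Suc a) = 0 \<or> A (\<rho> ! b) (\<rho> ! Suc b) = 0"
    using allowed by (auto simp: tau_allowed_def)
  then have "swp b \<rho> \<in> S \<and> swp a \<rho> \<in> S"
  proof
    assume z: "A (\<rho> ! a) (\<rho> ! Suc a) = 0"
    have "swp a (swp b \<rho>) \<in> S \<longleftrightarrow> swp b \<rho> \<in> S"
      using swp_in_S_iff[of a "swp b \<rho>"] a ab b sI z by (simp add: set_swp)
    then show ?thesis using swp_in_S_iff[OF a sI] z r both by simp
  next
    assume z: "A (\<rho> ! b) (\<rho> ! Suc b) = 0"
    have "swp b (swp a \<rho>) \<in> S \<longleftrightarrow> swp a \<rho> \<in> S"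
      using swp_in_S_iff[of b "swp a \<rho>"] a ab b sI z by (simp add: set_swp)
    then show ?thesis using swp_in_S_iff[OF b sI] z r both swp_commute[OF a b ab] by simp
  qed
  then show "swp b \<rho> \<in> S" and "swp a \<rho> \<in> S" by simp_all
qed

lemma tau_coeff_commute:
  assumes r: "\<rho> \<in> S" and ab: "Suc a < b" and b: "Suc b < length \<rho>"
  shows "tau_coeff a (swp b \<rho>) * tau_coeff b \<rho> =
    (if \<rho> ! a \<in> Iodd \<and> \<rho> ! Suc a \<in> Iodd \<and> \<rho> ! b \<in> Iodd \<and> \<rho> ! Suc b \<in> Iodd then -1 else 1)
     * (tau_coeff b (swp a \<rho>) * tau_coeff a \<rho>)"
proof -
  have a: "Suc a < length \<rho>" using ab b by simp
  let ?xa = "\<rho> ! a" and ?ya = "\<rho> ! Suc a" and ?xb = "\<rho> ! b" and ?yb = "\<rho> ! Suc b"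
  let ?F = "swp a (swp b \<rho>)" and ?allowed = "tau_allowed A X Y ?xa ?ya \<and> tau_allowed A X Y ?xb ?yb"
  have L: "tau_coeff a (swp b \<rho>) * tau_coeff b \<rho> = (if swp b \<rho> \<in> S \<and> ?F \<in> S \<and> ?allowed
      then (tau_sign Iodd rk a \<rho> * tau_scalar A t rk ?xa ?ya) * (tau_sign Iodd rk b \<rho> * tau_scalar A t rk ?xb ?yb)
      else 0)"
    using a b r ab by (simp add: tau_coeff_eq tau_sign_swp_later)
  have R: "tau_coeff b (swp a \<rho>) * tau_coeff a \<rho> = (if swp a \<rho> \<in> S \<and> ?F \<in> S \<and> ?allowed
      then (tau_sign Iodd rk b (swp a \<rho>) * tau_scalar A t rk ?xb ?yb) * (tau_sign Iodd rk a \<rho> * tau_scalar A t rk ?xa ?ya)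
      else 0)"
    using a b r ab by (simp add: tau_coeff_eq swp_commute[OF a b ab])
  have "rk ?xa \<noteq> rk ?ya" using S_rk[OF r] a by simp
  note sign = tau_sign_swp_earlier[OF b ab this]
  show ?thesis
  proof (cases "?allowed \<and> ?F \<in> S")
    case True
    then show ?thesis unfolding L R sign using swp_commute_in_S[OF r ab b] by simp
  next
    case False
    then show ?thesis unfolding L R by auto
  qed
qed

lemma swp_braid_in_S:
  assumes r: "\<rho> \<in> S" and a: "Suc (Suc a) < length \<rho>"
    and allowed: "tau_allowed A X Y (\<rho> ! a) (\<rho> ! Suc a)" "tau_allowed A X Y (\<rho> ! a) (\<rho> ! Suc (Suc a))"
      "tau_allowed A X Y (\<rho> ! Suc a) (\<rho> ! Suc (Suc a))"
  defines "n1 \<equiv> swp (Suc a) \<rho>" and "n2 \<equiv> swp a (swp (Suc a) \<rho>)" and "m1 \<equiv> swp a \<rho>"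
    and "m2 \<equiv> swp (Suc a) (swp a \<rho>)" and "n3 \<equiv> swp (Suc a) (swp a (swp (Suc a) \<rho>))"
  shows "n1 \<in> S \<and> n2 \<in> S \<and> n3 \<in> S \<longleftrightarrow> m1 \<in> S \<and> m2 \<in> S \<and> n3 \<in> S"
proof -
  let ?i = "\<rho> ! a" and ?j = "\<rho> ! Suc a" and ?k = "\<rho> ! Suc (Suc a)"
  have a1: "Suc a < length \<rho>" using a by simp
  have len: "length n1 = length \<rho>" "length n2 = length \<rho>" "length m1 = length \<rho>" "length m2 = length \<rho>"
    by (simp_all add: n1_def n2_def m1_def m2_def)
  have n1: "n1 ! a = ?i" "n1 ! Suc a = ?k" "n1 ! Suc (Suc a) = ?j" using a by (auto simp: n1_def)
  have n2: "n2 ! a = ?k" "n2 ! Suc a = ?i" "n2 ! Suc (Suc a) = ?j" using a n1 len by (auto simp: n2_def n1_def)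
  have m1: "m1 ! a = ?j" "m1 ! Suc a = ?i" "m1 ! Suc (Suc a) = ?k" using a by (auto simp: m1_def)
  have m2: "m2 ! a = ?j" "m2 ! Suc a = ?k" "m2 ! Suc (Suc a) = ?i" using a m1 len by (auto simp: m2_def m1_def)
  have n3: "n3 = swp (Suc a) n2" and m3: "n3 = swp a m2"
    using swp_braid[OF a] by (simp_all add: n3_def n2_def m2_def)
  have sI: "set \<rho> \<subseteq> I" using S_I[OF r] .
  have sets: "set n1 \<subseteq> I" "set n2 \<subseteq> I" "set m1 \<subseteq> I" "set m2 \<subseteq> I"
    using a sI by (simp_all add: n1_def n2_def m1_def m2_def set_swp)
  have f1: "A ?i ?j = 0 \<Longrightarrow> m1 \<in> S" using swp_in_S_iff[OF a1 sI] r by (simp add: m1_def)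
  have f2: "A ?i ?j = 0 \<Longrightarrow> (n3 \<in> S \<longleftrightarrow> n2 \<in> S)"
    using swp_in_S_iff[of "Suc a" n2] len a sets n2 by (simp add: n3)
  have f3: "A ?i ?k = 0 \<Longrightarrow> (n2 \<in> S \<longleftrightarrow> n1 \<in> S)"
    using swp_in_S_iff[of a n1] len a1 sets n1 by (simp add: n2_def n1_def[symmetric])
  have f4: "A ?i ?k = 0 \<Longrightarrow> (m2 \<in> S \<longleftrightarrow> m1 \<in> S)"
    using swp_in_S_iff[of "Suc a" m1] len a sets m1 by (simp add: m2_def m1_def[symmetric])
  have f5: "A ?j ?k = 0 \<Longrightarrow> n1 \<in> S" using swp_in_S_iff[OF a sI] r by (simp add: n1_def)
  have f6: "A ?j ?k = 0 \<Longrightarrow> (n3 \<in> S \<longleftrightarrow> m2 \<in> S)"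
    using swp_in_S_iff[of a m2] len a1 sets m2 by (simp add: m3)
  have "?i \<noteq> ?j" "?i \<noteq> ?k" "?j \<noteq> ?k" using S_neq[OF r] a by auto
  then show ?thesis using allowed f1 f2 f3 f4 f5 f6 unfolding tau_allowed_def by metis
qed

lemma tau_coeff_braid:
  assumes r: "\<rho> \<in> S" and a: "Suc (Suc a) < length \<rho>"
  shows "tau_coeff (Suc a) (swp a (swp (Suc a) \<rho>)) * tau_coeff a (swp (Suc a) \<rho>) * tau_coeff (Suc a) \<rho> =
         tau_coeff a (swp (Suc a) (swp a \<rho>)) * tau_coeff (Suc a) (swp a \<rho>) * tau_coeff a \<rho>"
proof -
  let ?i = "\<rho> ! a" and ?j = "\<rho> ! Suc a" and ?k = "\<rho> ! Suc (Suc a)"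
  let ?allowed = "tau_allowed A X Y ?i ?j \<and> tau_allowed A X Y ?i ?k \<and> tau_allowed A X Y ?j ?k"
  let ?scalars = "tau_scalar A t rk ?i ?j * tau_scalar A t rk ?i ?k * tau_scalar A t rk ?j ?k"
  define n1 where "n1 = swp (Suc a) \<rho>"
  define n2 where "n2 = swp a n1"
  define n3 where "n3 = swp (Suc a) n2"
  define m1 where "m1 = swp a \<rho>"
  define m2 where "m2 = swp (Suc a) m1"
  have m3: "swp a m2 = n3" unfolding n3_def n2_def n1_def m2_def m1_def using swp_braid[OF a] by simp
  have len: "length n1 = length \<rho>" "length n2 = length \<rho>" "length m1 = length \<rho>" "length m2 = length \<rho>"
    by (simp_all add: n1_def n2_def m1_def m2_def)
  have n: "n1 ! a = ?i" "n1 ! Suc a = ?k" "n2 ! Suc a = ?i" "n2 ! Suc (Suc a) = ?j"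
    using a len by (auto simp: n2_def n1_def nth_swp)
  have m: "m1 ! Suc a = ?i" "m1 ! Suc (Suc a) = ?k" "m2 ! a = ?j" "m2 ! Suc a = ?k"
    using a len by (auto simp: m2_def m1_def nth_swp)
  have L: "tau_coeff (Suc a) n2 * tau_coeff a n1 * tau_coeff (Suc a) \<rho> =
     (if n1 \<in> S \<and> n2 \<in> S \<and> n3 \<in> S \<and> ?allowed
      then (tau_sign Iodd rk (Suc a) n2 * tau_sign Iodd rk a n1 * tau_sign Iodd rk (Suc a) \<rho>) * ?scalars else 0)"
    using a len r by (simp add: tau_coeff_eq n n1_def[symmetric] n2_def[symmetric] n3_def[symmetric] mult_ac)
  have R: "tau_coeff a m2 * tau_coeff (Suc a) m1 * tau_coeff a \<rho> =
     (if m1 \<in> S \<and> m2 \<in> S \<and> n3 \<in> S \<and> ?allowed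
      then (tau_sign Iodd rk a m2 * tau_sign Iodd rk (Suc a) m1 * tau_sign Iodd rk a \<rho>) * ?scalars else 0)"
    using a len r m3 by (simp add: tau_coeff_eq m m1_def[symmetric] m2_def[symmetric] mult_ac)
  have "rk ?i \<noteq> rk ?j" "rk ?i \<noteq> rk ?k" "rk ?j \<noteq> rk ?k" using S_rk[OF r] a by auto
  note sign = tau_sign_braid[OF a this, where Iodd = Iodd, folded n1_def m1_def, folded n2_def m2_def]
  have "?allowed \<Longrightarrow> n1 \<in> S \<and> n2 \<in> S \<and> n3 \<in> S \<longleftrightarrow> m1 \<in> S \<and> m2 \<in> S \<and> n3 \<in> S"
    using swp_braid_in_S[OF r a] by (simp add: n1_def n2_def n3_def m1_def m2_def)
  then have "tau_coeff (Suc a) n2 * tau_coeff a n1 * tau_coeff (Suc a) \<rho> =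
      tau_coeff a m2 * tau_coeff (Suc a) m1 * tau_coeff a \<rho>"
    unfolding L R sign by auto
  then show ?thesis by (simp add: n1_def n2_def m1_def m2_def)
qed


definition acts_zero :: "('i, 'k) fa \<Rightarrow> bool" where
  "acts_zero f \<longleftrightarrow> finite (x_free_support f) \<and> (\<forall>\<sigma> \<sigma>'. \<sigma> \<in> S \<longrightarrow> rep_coeff f \<sigma>' \<sigma> = 0)"

lemma rep_coeff_diff: "finite (x_free_support f) \<Longrightarrow> finite (x_free_support g) \<Longrightarrow>
   finite (x_free_support (\<lambda>w. f w - g w)) \<and> rep_coeff (\<lambda>w. f w - g w) \<sigma>' \<sigma> = rep_coeff f \<sigma>' \<sigma> - rep_coeff g \<sigma>' \<sigma>"
proof -
  assume ff: "finite (x_free_support f)" and fg: "finite (x_free_support g)"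
  have m: "(\<lambda>w. (-1) * g w) = (\<lambda>w. - g w)" by simp
  have g': "finite (x_free_support (\<lambda>w. - g w))" "rep_coeff (\<lambda>w. - g w) \<sigma>' \<sigma> = - rep_coeff g \<sigma>' \<sigma>"
    using rep_coeff_smult[OF fg, of "-1" \<sigma>' \<sigma>] unfolding m by auto
  have e: "(\<lambda>w. f w - g w) = (\<lambda>w. f w + - g w)" by simp
  show ?thesis unfolding e using rep_coeff_add[OF ff g'(1)] g'(2) by simp
qed

lemma acts_zero_fa_lin: "(\<And>\<sigma> \<sigma>'. \<sigma> \<in> S \<Longrightarrow> sum_list (map (\<lambda>(c,u). c * word_coeff u \<sigma>' \<sigma>) xs) = 0) \<Longrightarrow> acts_zero (fa_lin xs)"
  using rep_coeff_fa_lin by (simp add: acts_zero_def)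

lemma S_adjacent_neq: "\<nu> \<in> S \<Longrightarrow> Suc a < n \<Longrightarrow> \<nu> ! a \<noteq> \<nu> ! Suc a"
  using S_neq[of \<nu> a "Suc a"] S_len by simp

lemma acts_zero_idem_mult: "acts_zero (fa_lin ([(1, [GE \<mu>, GE \<nu>])] @ (if \<mu> = \<nu> then [(- 1, [GE \<nu>])] else [])))"
  by (rule acts_zero_fa_lin) (auto simp: word_coeff_def)

lemma acts_zero_idem_sum: "acts_zero (\<lambda>w. (if \<exists>\<nu>\<in>Ib. w = [GE \<nu>] then 1 else 0) - (if w = [] then 1 else (0::'k)))"
proof -
  have e: "(\<lambda>w. (if \<exists>\<nu>\<in>Ib. w = [GE \<nu>] then 1 else 0) - (if w = [] then 1 else (0::'k))) =
     (\<lambda>w. (\<Sum>\<nu>\<in>Ib. fa_word [GE \<nu>] w) - fa_word [] w)"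
    using finite_Ib by (auto simp: fa_word_def fun_eq_iff)
  have s: "finite (x_free_support (\<lambda>w. \<Sum>\<nu>\<in>Ib. fa_word [GE \<nu>] w :: 'k))"
    "\<And>\<sigma>' \<sigma>. rep_coeff (\<lambda>w. \<Sum>\<nu>\<in>Ib. fa_word [GE \<nu>] w :: 'k) \<sigma>' \<sigma> = (\<Sum>\<nu>\<in>Ib. rep_coeff (fa_word [GE \<nu>]) \<sigma>' \<sigma>)"
    using rep_coeff_sum[OF finite_Ib, of "\<lambda>\<nu>. fa_word [GE \<nu>]"] rep_coeff_fa_word by auto
  show ?thesis unfolding e acts_zero_def
  proof (intro conjI allI impI)
    show "finite (x_free_support (\<lambda>w. (\<Sum>\<nu>\<in>Ib. fa_word [GE \<nu>] w) - fa_word [] w :: 'k))"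
      by (rule conjunct1[OF rep_coeff_diff[OF s(1) rep_coeff_fa_word[of "[]", THEN conjunct1]]])
    fix \<sigma> \<sigma>' assume \<sigma>: "\<sigma> \<in> S"
    have "rep_coeff (\<lambda>w. (\<Sum>\<nu>\<in>Ib. fa_word [GE \<nu>] w) - fa_word [] w :: 'k) \<sigma>' \<sigma> = (\<Sum>\<nu>\<in>Ib. word_coeff [GE \<nu>] \<sigma>' \<sigma>) - word_coeff [] \<sigma>' \<sigma>"
      using rep_coeff_diff[OF s(1) rep_coeff_fa_word[of "[]", THEN conjunct1]] s(2) rep_coeff_fa_word by simp
    also have "(\<Sum>\<nu>\<in>Ib. word_coeff [GE \<nu>] \<sigma>' \<sigma>) = (\<Sum>\<nu>\<in>Ib. if \<nu> = \<sigma> then (if \<sigma>' = \<sigma> then 1 else 0) else 0)"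
      by (rule sum.cong) (auto simp: word_coeff_def \<sigma>)
    also have "\<dots> = (if \<sigma>' = \<sigma> then 1 else 0)" using \<sigma> S_subset finite_Ib by auto
    finally show "rep_coeff (\<lambda>w. (\<Sum>\<nu>\<in>Ib. fa_word [GE \<nu>] w) - fa_word [] w :: 'k) \<sigma>' \<sigma> = 0" by (simp add: word_coeff_def \<sigma>)
  qed
qed

lemma acts_zero_x_commute: "acts_zero (fa_lin [(1, [GX p, GX q, GE \<nu>]), (c, [GX q, GX p, GE \<nu>])])"
  by (rule acts_zero_fa_lin) simp

lemma acts_zero_x_idem: "acts_zero (fa_lin [(1, [GX p, GE \<nu>]), (- 1, [GE \<nu>, GX p])])"
  by (rule acts_zero_fa_lin) simp

lemma acts_zero_tau_idem: "acts_zero (fa_lin [(1, [GT a, GE \<nu>]), (- 1, [GE (swp a \<nu>), GT a])])"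
proof (rule acts_zero_fa_lin)
  fix \<sigma> \<sigma>' assume \<sigma>: "\<sigma> \<in> S"
  have "tau_coeff a \<sigma> \<noteq> 0 \<Longrightarrow> swp a \<sigma> = swp a \<nu> \<Longrightarrow> \<sigma> = \<nu>"
  proof -
    assume c: "tau_coeff a \<sigma> \<noteq> 0" and e: "swp a \<sigma> = swp a \<nu>"
    have l: "Suc a < length \<sigma>" using c by (simp add: tau_coeff_def split: if_splits)
    have l2: "Suc a < length \<nu>" using l e by (metis length_swp)
    show "\<sigma> = \<nu>" using arg_cong[OF e, of "swp a"] l l2 by simp
  qed
  then show "sum_list (map (\<lambda>(c, u). c * word_coeff u \<sigma>' \<sigma>) [(1, [GT a, GE \<nu>]), (- 1, [GE (swp a \<nu>), GT a])]) = 0"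
    by (auto simp: word_coeff_def)
qed

lemma acts_zero_tau_x: "acts_zero (fa_lin [(1, [GT a, GX p, GE \<nu>]), (c, [GX p, GT a, GE \<nu>])])"
  by (rule acts_zero_fa_lin) simp

lemma acts_zero_tau_x_succ: "Suc a < n \<Longrightarrow> acts_zero (fa_lin ([(1, [GT a, GX (a+1), GE \<nu>]), (c, [GX a, GT a, GE \<nu>])]
        @ (if \<nu> ! a = \<nu> ! (a+1) then [(- 1, [GE \<nu>])] else [])))"
  by (rule acts_zero_fa_lin) (auto simp: word_coeff_def dest: S_adjacent_neq)

lemma acts_zero_x_succ_tau: "Suc a < n \<Longrightarrow> acts_zero (fa_lin ([(1, [GX (a+1), GT a, GE \<nu>]), (c, [GT a, GX a, GE \<nu>])]
        @ (if \<nu> ! a = \<nu> ! (a+1) then [(- 1, [GE \<nu>])] else [])))"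
  by (rule acts_zero_fa_lin) (auto simp: word_coeff_def dest: S_adjacent_neq)


lemma word_coeff_idem: "\<sigma> \<in> S \<Longrightarrow> word_coeff [GE \<nu>] \<sigma>' \<sigma> = (if \<sigma> = \<nu> \<and> \<sigma>' = \<sigma> then 1 else 0)"
  by (auto simp: word_coeff_def)

lemma Qel_x_free: "x_free w \<Longrightarrow> Qel t i j a b \<nu> w = (if w = [GE \<nu>] then t i j 0 0 else 0)"
proof -
  assume xw: "x_free w"
  have "Qel t i j a b \<nu> w = (\<Sum>r\<le>length w. \<Sum>s\<le>length w. if r = 0 \<and> s = 0 \<and> w = [GE \<nu>] then t i j 0 0 else 0)"
    unfolding Qel_def
  proof (intro sum.cong refl)
    fix r s
    show "(if w = replicate r (GX a) @ replicate s (GX b) @ [GE \<nu>] then t i j r s else 0) =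
          (if r = 0 \<and> s = 0 \<and> w = [GE \<nu>] then t i j 0 0 else 0)"
    proof (cases "w = replicate r (GX a) @ replicate s (GX b) @ [GE \<nu>]")
      case True
      then have "r = 0 \<and> s = 0" using xw by simp
      then show ?thesis using True by simp
    next
      case False then show ?thesis by auto
    qed
  qed
  also have "\<dots> = (if w = [GE \<nu>] then t i j 0 0 else 0)"
    by (simp add: if_distrib sum.delta)
  finally show ?thesis .
qed

lemma rep_coeff_Qel: "finite (x_free_support (Qel t i j a b \<nu>)) \<and> rep_coeff (Qel t i j a b \<nu>) \<sigma>' \<sigma> = t i j 0 0 * word_coeff [GE \<nu>] \<sigma>' \<sigma>"
proof -
  have sub: "x_free_support (Qel t i j a b \<nu>) \<subseteq> {[GE \<nu>]}" by (auto simp: x_free_support_def Qel_x_free split: if_splits)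
  have "rep_coeff (Qel t i j a b \<nu>) \<sigma>' \<sigma> = (\<Sum>w\<in>{[GE \<nu>]}. Qel t i j a b \<nu> w * word_coeff w \<sigma>' \<sigma>)"
    by (rule rep_coeff_eq) (use sub in auto)
  then show ?thesis using finite_subset[OF sub] by (simp add: Qel_x_free)
qed

lemma acts_zero_tau_square: "Suc a < n \<Longrightarrow> acts_zero (\<lambda>w. fa_lin [(1, [GT a, GT a, GE \<nu>])] w - Qel t (\<nu> ! a) (\<nu> ! (a+1)) a (a+1) \<nu> w)"
proof -
  assume an: "Suc a < n"
  let ?Q = "Qel t (\<nu> ! a) (\<nu> ! (a+1)) a (a+1) \<nu>"
  have d: "finite (x_free_support (\<lambda>w. fa_lin [(1, [GT a, GT a, GE \<nu>])] w - ?Q w))"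
    "\<And>\<sigma>' \<sigma>. rep_coeff (\<lambda>w. fa_lin [(1, [GT a, GT a, GE \<nu>])] w - ?Q w) \<sigma>' \<sigma> =
       word_coeff [GT a, GT a, GE \<nu>] \<sigma>' \<sigma> - t (\<nu> ! a) (\<nu> ! (a+1)) 0 0 * word_coeff [GE \<nu>] \<sigma>' \<sigma>"
    using rep_coeff_diff[OF rep_coeff_fa_lin[THEN conjunct1] rep_coeff_Qel[THEN conjunct1]] rep_coeff_fa_lin rep_coeff_Qel by auto
  show ?thesis unfolding acts_zero_def
  proof (intro conjI allI impI d(1))
    fix \<sigma> \<sigma>' assume \<sigma>: "\<sigma> \<in> S"
    show "rep_coeff (\<lambda>w. fa_lin [(1, [GT a, GT a, GE \<nu>])] w - ?Q w) \<sigma>' \<sigma> = 0"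
    proof (cases "\<sigma> = \<nu>")
      case True
      have l: "Suc a < length \<nu>" using S_len \<sigma> True an by simp
      have "word_coeff [GT a, GT a, GE \<nu>] \<sigma>' \<sigma> = (if \<sigma>' = \<nu> then tau_coeff a (swp a \<nu>) * tau_coeff a \<nu> else 0)"
        using \<sigma> True l by (simp add: word_coeff_def)
      also have "\<dots> = (if \<sigma>' = \<nu> then t (\<nu> ! a) (\<nu> ! Suc a) 0 0 else 0)"
        using tau_coeff_square[of \<nu> a] \<sigma> True l by simp
      finally show ?thesis unfolding d(2) using \<sigma> True by (simp add: word_coeff_idem)
    next
      case False
      then show ?thesis unfolding d(2) using \<sigma> by (simp add: word_coeff_def)
    qed
  qed
qed

lemma sg_square: "sg P * sg P = (1::'k)" by (simp add: sg_def)

lemma acts_zero_tau_commute: "Suc a < n \<Longrightarrow> Suc b < n \<Longrightarrow> a + 1 < b \<or> b + 1 < a \<Longrightarrow>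
   acts_zero (fa_lin [(1, [GT a, GT b, GE \<nu>]),
        (- sg (\<nu> ! a \<in> Iodd \<and> \<nu> ! (a+1) \<in> Iodd \<and> \<nu> ! b \<in> Iodd \<and> \<nu> ! (b+1) \<in> Iodd), [GT b, GT a, GE \<nu>])])"
proof (rule acts_zero_fa_lin)
  assume an: "Suc a < n" and bn: "Suc b < n" and ab: "a + 1 < b \<or> b + 1 < a"
  fix \<sigma> \<sigma>' assume \<sigma>: "\<sigma> \<in> S"
  let ?P = "\<nu> ! a \<in> Iodd \<and> \<nu> ! (a+1) \<in> Iodd \<and> \<nu> ! b \<in> Iodd \<and> \<nu> ! (b+1) \<in> Iodd"
  show "sum_list (map (\<lambda>(c, u). c * word_coeff u \<sigma>' \<sigma>) [(1, [GT a, GT b, GE \<nu>]), (- sg ?P, [GT b, GT a, GE \<nu>])]) = 0"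
  proof (cases "\<sigma> = \<nu>")
    case False then show ?thesis by (simp add: word_coeff_def)
  next
    case True
    have la: "Suc a < length \<nu>" and lb: "Suc b < length \<nu>" using S_len \<sigma> True an bn by auto
    have sw: "swp a (swp b \<nu>) = swp b (swp a \<nu>)"
      using ab swp_commute[OF la lb] swp_commute[OF lb la] by auto
    have key: "tau_coeff a (swp b \<nu>) * tau_coeff b \<nu> = sg ?P * (tau_coeff b (swp a \<nu>) * tau_coeff a \<nu>)"
    proof (cases "a + 1 < b")
      case True
      then show ?thesis using tau_coeff_commute[of \<nu> a b] \<sigma> \<open>\<sigma> = \<nu>\<close> lb by (simp add: sg_def)
    next
      case False
      then have ba: "Suc b < a" using ab by simp
      have e: "tau_coeff b (swp a \<nu>) * tau_coeff a \<nu> = sg ?P * (tau_coeff a (swp b \<nu>) * tau_coeff b \<nu>)"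
        using tau_coeff_commute[of \<nu> b a] \<sigma> \<open>\<sigma> = \<nu>\<close> la ba by (simp add: sg_def conj_ac)
      have "sg ?P * (tau_coeff b (swp a \<nu>) * tau_coeff a \<nu>) = (sg ?P * sg ?P) * (tau_coeff a (swp b \<nu>) * tau_coeff b \<nu>)"
        unfolding e by (simp only: mult.assoc)
      then show ?thesis by (simp add: sg_square)
    qed
    show ?thesis using \<sigma> True key sw by (simp add: word_coeff_def mult.assoc)
  qed
qed

lemma Beven_x_free: "x_free w \<Longrightarrow> Beven t i j a \<nu> w \<noteq> 0 \<Longrightarrow> w = [GE \<nu>]"
proof (rule ccontr)
  assume xw: "x_free w" and nz: "Beven t i j a \<nu> w \<noteq> 0" and ne: "w \<noteq> [GE \<nu>]"
  have "Beven t i j a \<nu> w = 0"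
    unfolding Beven_def
  proof (intro sum.neutral ballI)
    fix r s k
    show "(if w = replicate k (GX (a+2)) @ replicate (r - 1 - k) (GX a) @ replicate s (GX (a+1)) @ [GE \<nu>]
      then t i j r s else 0) = 0"
    proof (cases "w = replicate k (GX (a+2)) @ replicate (r - 1 - k) (GX a) @ replicate s (GX (a+1)) @ [GE \<nu>]")
      case True
      then have "k = 0 \<and> r - 1 - k = 0 \<and> s = 0" using xw by simp
      then show ?thesis using True ne by simp
    qed simp
  qed
  then show False using nz by simp
qed

lemma acts_zero_zero: "acts_zero (\<lambda>_. 0)"
  by (simp add: acts_zero_def x_free_support_def rep_coeff_def)

lemma acts_zero_braid_rhs: "Suc (Suc a) < n \<Longrightarrow> acts_zero (braid_rhs Iodd t a \<nu>)"
proof (cases "\<nu> \<in> S")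
  case True
  assume an: "Suc (Suc a) < n"
  have "\<nu> ! a \<noteq> \<nu> ! (a+2)" using S_neq[OF True, of a "a+2"] S_len[OF True] an by simp
  then have "braid_rhs Iodd t a \<nu> = (\<lambda>_. 0)" by (simp add: braid_rhs_def)
  then show ?thesis using acts_zero_zero by simp
next
  case False
  have ev: "acts_zero (Beven t i j a \<nu>)" for i j
  proof -
    have sub: "x_free_support (Beven t i j a \<nu>) \<subseteq> {[GE \<nu>]}" using Beven_x_free by (auto simp: x_free_support_def)
    have "rep_coeff (Beven t i j a \<nu>) \<sigma>' \<sigma> = (\<Sum>w\<in>{[GE \<nu>]}. Beven t i j a \<nu> w * word_coeff w \<sigma>' \<sigma>)" for \<sigma>' \<sigma>
      by (rule rep_coeff_eq) (use sub in auto)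
    then show ?thesis unfolding acts_zero_def using finite_subset[OF sub] False by (auto simp: word_coeff_def)
  qed
  have od: "acts_zero (\<lambda>w. c * fa_mult (fa_lin [(1, [GX (a+2)]), (- 1, [GX a])]) g w)" for c g
  proof -
    have "x_free_support (\<lambda>w. c * fa_mult (fa_lin [(1, [GX (a+2)]), (- 1, [GX a])]) g w :: 'k) = {}"
    proof -
      have "fa_mult (fa_lin [(1, [GX (a+2)]), (- 1, [GX a])]) g w = 0" if xw: "x_free w" for w
        unfolding fa_mult_def
      proof (intro sum.neutral ballI)
        fix i
        have "x_free (take i w)" using xw by (rule x_free_take)
        then have "fa_lin [(1, [GX (a+2)]), (- 1, [GX a])] (take i w) = (0::'k)"
          by (auto simp: fa_lin_Cons fa_lin_Nil)
        then show "fa_lin [(1, [GX (a+2)]), (- 1, [GX a])] (take i w) * g (drop i w) = 0" by simp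
      qed
      then show ?thesis by (auto simp: x_free_support_def)
    qed
    then show ?thesis by (simp add: acts_zero_def rep_coeff_def)
  qed
  show ?thesis unfolding braid_rhs_def using ev od acts_zero_zero by simp
qed

lemma acts_zero_tau_braid: "a + 2 < n \<Longrightarrow> acts_zero (\<lambda>w. fa_lin [(1, [GT (a+1), GT a, GT (a+1), GE \<nu>]), (- 1, [GT a, GT (a+1), GT a, GE \<nu>])] w
          - braid_rhs Iodd t a \<nu> w)"
proof -
  assume an: "a + 2 < n"
  let ?f = "fa_lin [(1, [GT (a+1), GT a, GT (a+1), GE \<nu>]), (- 1, [GT a, GT (a+1), GT a, GE \<nu>])] :: ('i,'k) fa"
  have g: "acts_zero (braid_rhs Iodd t a \<nu>)" using acts_zero_braid_rhs an by simp
  have f: "acts_zero ?f"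
  proof (rule acts_zero_fa_lin)
    fix \<sigma> \<sigma>' assume \<sigma>: "\<sigma> \<in> S"
    show "sum_list (map (\<lambda>(c, u). c * word_coeff u \<sigma>' \<sigma>) [(1, [GT (a+1), GT a, GT (a+1), GE \<nu>]), (- 1, [GT a, GT (a+1), GT a, GE \<nu>])]) = 0"
    proof (cases "\<sigma> = \<nu>")
      case False then show ?thesis by (simp add: word_coeff_def)
    next
      case True
      have l: "Suc (Suc a) < length \<nu>" using S_len \<sigma> True an by auto
      show ?thesis using \<sigma> True tau_coeff_braid[of \<nu> a] swp_braid[OF l] l by (simp add: word_coeff_def mult.assoc)
    qed
  qed
  have d: "finite (x_free_support (\<lambda>w. ?f w - braid_rhs Iodd t a \<nu> w))"
    "\<And>\<sigma>' \<sigma>. rep_coeff (\<lambda>w. ?f w - braid_rhs Iodd t a \<nu> w) \<sigma>' \<sigma> = rep_coeff ?f \<sigma>' \<sigma> - rep_coeff (braid_rhs Iodd t a \<nu>) \<sigma>' \<sigma>"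
    using rep_coeff_diff[of ?f "braid_rhs Iodd t a \<nu>"] f g by (auto simp: acts_zero_def)
  show ?thesis using d f g by (simp add: acts_zero_def)
qed

lemma acts_zero_cyclotomic:
  assumes n0: "0 < n"
  shows "acts_zero (\<lambda>w. if \<exists>\<nu>\<in>Ib. w = replicate (nat (h (\<nu> ! 0) \<Lambda>)) (GX 0) @ [GE \<nu>] then 1 else (0::'k))"
    (is "acts_zero ?Z")
proof -
  let ?W = "(\<lambda>\<nu>. [GE \<nu>]) ` {\<nu> \<in> Ib. nat (h (\<nu> ! 0) \<Lambda>) = 0}"
  have sub: "x_free_support ?Z \<subseteq> ?W"
    by (auto simp: x_free_support_def split: if_splits)
  have fin: "finite ?W" using finite_Ib by simp
  have "word_coeff w \<sigma>' \<sigma> = 0" if "\<sigma> \<in> S" and "w \<in> ?W" for \<sigma> \<sigma>' w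
    using that(2) S_first_weight[OF that(1) n0] by (auto simp: word_coeff_def)
  then have "rep_coeff ?Z \<sigma>' \<sigma> = 0" if "\<sigma> \<in> S" for \<sigma> \<sigma>'
    using rep_coeff_eq[OF fin sub] that by (simp add: sum.neutral)
  then show ?thesis unfolding acts_zero_def using finite_subset[OF sub fin] by simp
qed

lemma acts_zero_relsR: "r \<in> relsR Iodd t Ib n \<Longrightarrow> acts_zero r"
  unfolding relsR_def
  by (elim UnE) (blast intro: acts_zero_idem_mult acts_zero_idem_sum acts_zero_x_commute acts_zero_x_idem acts_zero_tau_idem acts_zero_tau_x acts_zero_tau_x_succ acts_zero_x_succ_tau acts_zero_tau_square acts_zero_tau_commute acts_zero_tau_braid)+

lemma acts_zero_relsCyc: "r \<in> relsCyc h \<Lambda> Ib n \<Longrightarrow> acts_zero r"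
  unfolding relsCyc_def by (auto split: if_splits intro: acts_zero_cyclotomic)

lemma finite_x_free_support_if_fa_elem: "fa_elem Ib' n' a \<Longrightarrow> finite (x_free_support a)"
  unfolding fa_elem_def x_free_support_def by (auto intro: finite_subset)

lemma acts_zero_fa_mult:
  assumes a: "finite (x_free_support a)" and f: "acts_zero f"
  shows "acts_zero (fa_mult a f)" and "acts_zero (fa_mult f a)"
proof -
  have ff: "finite (x_free_support f)" and f0: "\<And>\<sigma> \<sigma>'. \<sigma> \<in> S \<Longrightarrow> rep_coeff f \<sigma>' \<sigma> = 0"
    using f by (simp_all add: acts_zero_def)
  show "acts_zero (fa_mult a f)" unfolding acts_zero_def using rep_coeff_mult[OF a ff] f0 by simp
  show "acts_zero (fa_mult f a)" unfolding acts_zero_def using rep_coeff_mult[OF ff a] f0 by simp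
qed

lemma acts_zero_if_vanishes: "vanishes f \<Longrightarrow> acts_zero f"
proof (induction rule: in_ideal.induct)
  case (gen s)
  then show ?case using acts_zero_relsR acts_zero_relsCyc by blast
next
  case zero
  then show ?case using acts_zero_zero by simp
next
  case (add f g)
  then show ?case using rep_coeff_add unfolding acts_zero_def by simp
next
  case (smult f c)
  then show ?case using rep_coeff_smult unfolding acts_zero_def by simp
next
  case (lmult a f)
  then show ?case using acts_zero_fa_mult(1) finite_x_free_support_if_fa_elem by blast
next
  case (rmult a f)
  then show ?case using acts_zero_fa_mult(2) finite_x_free_support_if_fa_elem by blast
qed

lemma tau_nonzero_between_idems:
  assumes \<sigma>: "\<sigma> \<in> S" and s2: "swp b \<sigma> \<in> S" and b: "Suc b < n"
    and al: "tau_allowed A X Y (\<sigma> ! b) (\<sigma> ! Suc b)"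
  shows "\<not> vanishes (fa_mult (fa_mult (idem (swp b \<sigma>)) (fa_word [GT b])) (idem \<sigma>))"
proof
  assume "vanishes (fa_mult (fa_mult (idem (swp b \<sigma>)) (fa_word [GT b])) (idem \<sigma>))"
  then have g: "acts_zero (fa_word [GE (swp b \<sigma>), GT b, GE \<sigma>] :: ('i,'k) fa)"
    by (simp add: idem_eq_fa_word fa_mult_word_word acts_zero_if_vanishes)
  have l: "Suc b < length \<sigma>" using S_len[OF \<sigma>] b by simp
  have "rep_coeff (fa_word [GE (swp b \<sigma>), GT b, GE \<sigma>] :: ('i,'k) fa) (swp b \<sigma>) \<sigma> = tau_coeff b \<sigma>"
    using rep_coeff_fa_word \<sigma> by (simp add: word_coeff_def)
  moreover have "tau_coeff b \<sigma> \<noteq> 0"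
  proof -
    have I: "\<sigma> ! b \<in> I" "\<sigma> ! Suc b \<in> I" using S_nth_in_I[OF \<sigma>] l by auto
    have ne: "\<sigma> ! b \<noteq> \<sigma> ! Suc b" using S_neq[OF \<sigma>] l by simp
    have "tau_scalar A t rk (\<sigma> ! b) (\<sigma> ! Suc b) \<noteq> 0" using t_orth_00[OF I ne] by (simp add: tau_scalar_def)
    moreover have "tau_sign Iodd rk b \<sigma> \<noteq> (0::'k)" by (rule tau_sign_nonzero)
    ultimately show ?thesis using \<sigma> s2 l al by (simp add: tau_coeff_eq)
  qed
  ultimately show False using g \<sigma> unfolding acts_zero_def by auto
qed

end
section \<open>Consecutive admissible orderings are linked\<close>

lemma degree_condition_orthogonal_iff:
  fixes bf :: "'p \<Rightarrow> 'p \<Rightarrow> rat" and \<alpha> :: "'i \<Rightarrow> 'p"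
  assumes A_diag: "\<forall>i\<in>I. A i i = 2" and d_pos: "\<forall>i\<in>I. 0 < d i"
    and bf_A: "\<forall>i\<in>I. \<forall>j\<in>I. bf (\<alpha> i) (\<alpha> j) = of_int (d i * A i j)"
    and x: "x \<in> I" and y: "y \<in> I"
    and deg: "- 2 * bf (\<alpha> x) (\<alpha> y) - of_nat r * bf (\<alpha> x) (\<alpha> x) - of_nat s * bf (\<alpha> y) (\<alpha> y) = 0"
  shows "A x y = 0 \<longleftrightarrow> r = 0 \<and> s = 0"
proof -
  have "of_int (d x * A x y + int r * d x + int s * d y) = (0::rat)"
    using deg bf_A A_diag x y by (simp add: algebra_simps)
  then have eq: "d x * A x y + int r * d x + int s * d y = 0" by (simp only: of_int_eq_0_iff)
  have dx: "0 < d x" and dy: "0 < d y" using d_pos x y by auto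
  show ?thesis
  proof
    assume "A x y = 0"
    moreover have "0 \<le> int r * d x" "0 \<le> int s * d y" using dx dy by simp_all
    moreover have "int r * d x + int s * d y = 0" using eq \<open>A x y = 0\<close> by simp
    ultimately have "int r * d x = 0" "int s * d y = 0" by linarith+
    then show "r = 0 \<and> s = 0" using dx dy by simp
  next
    assume "r = 0 \<and> s = 0"
    then show "A x y = 0" using eq dx by simp
  qed
qed

lemma multfree_datum_Ibeta:
  fixes \<alpha> :: "'i \<Rightarrow> 'p::ab_group_add" and bf :: "'p \<Rightarrow> 'p \<Rightarrow> rat"
    and t :: "'i \<Rightarrow> 'i \<Rightarrow> nat \<Rightarrow> nat \<Rightarrow> 'k::field"
  assumes A_diag: "\<forall>i\<in>I. A i i = 2"
    and A_off: "\<forall>i\<in>I. \<forall>j\<in>I. i \<noteq> j \<longrightarrow> A i j \<le> 0"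
    and A_zero: "\<forall>i\<in>I. \<forall>j\<in>I. A i j = 0 \<longleftrightarrow> A j i = 0"
    and d_pos: "\<forall>i\<in>I. 0 < d i"
    and \<alpha>_indep: "zlin_indep I \<alpha>"
    and h_\<alpha>: "\<forall>i\<in>I. \<forall>j\<in>I. h i (\<alpha> j) = A i j"
    and bf_\<alpha>: "\<forall>i\<in>I. \<forall>x. bf (\<alpha> i) x = of_int (d i * h i x)"
    and t_deg: "\<forall>i\<in>I. \<forall>j\<in>I. \<forall>r s. t i j r s \<noteq> 0 \<longrightarrow>
      - 2 * bf (\<alpha> i) (\<alpha> j) - of_nat r * bf (\<alpha> i) (\<alpha> i) - of_nat s * bf (\<alpha> j) (\<alpha> j) = 0"
    and t_sym: "\<forall>i\<in>I. \<forall>j\<in>I. \<forall>r s. t i j r s = t j i s r"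
    and t_unit: "\<forall>i\<in>I. \<forall>j\<in>I. i \<noteq> j \<longrightarrow> t i j (nat (- A i j)) 0 \<noteq> 0"
    and \<Lambda>_dom: "\<forall>i\<in>I. 0 \<le> h i \<Lambda>"
    and js: "set js \<subseteq> I" "distinct js"
  shows "multfree_datum I A t h \<Lambda> (Ibeta I \<alpha> (sum_list (map \<alpha> js))) (length js)"
proof -
  have bf_A: "\<forall>i\<in>I. \<forall>j\<in>I. bf (\<alpha> i) (\<alpha> j) = of_int (d i * A i j)" using bf_\<alpha> h_\<alpha> by simp
  note orth_iff = degree_condition_orthogonal_iff[where bf = bf and \<alpha> = \<alpha>, OF A_diag d_pos bf_A]
  show ?thesis
  proof
    fix x y r s assume x: "x \<in> I" and y: "y \<in> I"
    show "A x y = 0 \<Longrightarrow> t x y r s \<noteq> 0 \<Longrightarrow> r = 0 \<and> s = 0"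
      using orth_iff[OF x y] t_deg[rule_format, OF x y] by blast
    show "A x y \<noteq> 0 \<Longrightarrow> t x y 0 0 = 0"
      using orth_iff[OF x y, of 0 0] t_deg[rule_format, OF x y] by blast
    show "t x y 0 0 \<noteq> 0" if "x \<noteq> y" and "A x y = 0"
      using t_unit[rule_format, OF x y that(1)] that(2) by simp
    show "t x y 0 0 = t y x 0 0" using t_sym x y by simp
    show "A x y \<le> 0" if "x \<noteq> y" using A_off x y that by simp
    show "A x y = 0 \<longleftrightarrow> A y x = 0" using A_zero x y by simp
  next
    fix x assume "x \<in> I"
    then show "0 \<le> h x \<Lambda>" using \<Lambda>_dom by simp
  next
    show "finite (Ibeta I \<alpha> (sum_list (map \<alpha> js)))" by (rule finite_Ibeta_multiplicity_free[OF \<alpha>_indep js])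
  next
    fix \<rho> b assume \<rho>: "\<rho> \<in> Ibeta I \<alpha> (sum_list (map \<alpha> js))"
    show "length \<rho> = length js" and "distinct \<rho>" using Ibeta_multiplicity_free[OF \<alpha>_indep js \<rho>] by simp_all
    show "set \<rho> \<subseteq> I" using \<rho> by (simp add: Ibeta_def)
    show "Suc b < length \<rho> \<Longrightarrow> swp b \<rho> \<in> Ibeta I \<alpha> (sum_list (map \<alpha> js))"
      using \<rho> by (rule swp_in_Ibeta)
  qed
qed

context multfree_datum
begin

lemma admissible_Ib_swp_orthogonal:
  assumes \<rho>: "\<rho> \<in> admissible_Ib" and b: "Suc b < n" and orth: "A (\<rho> ! b) (\<rho> ! Suc b) = 0"
  shows "swp b \<rho> \<in> admissible_Ib"
proof -
  have \<rho>Ib: "\<rho> \<in> Ib" and adm: "admissible A wt\<Lambda> \<rho>" using \<rho> by (auto simp: admissible_Ib_def)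
  have l: "Suc b < length \<rho>" using Ib_length[OF \<rho>Ib] b by simp
  have "A (\<rho> ! Suc b) (\<rho> ! b) = 0" using orth A_zero nth_Ib[OF \<rho>Ib] l by auto
  then show ?thesis
    using Ib_swp[OF \<rho>Ib l] admissible_swp_orthogonal[OF l adm orth] by (simp add: admissible_Ib_def)
qed

lemma tau_nonzero_if_swap_step:
  assumes "swap_step admissible_Ib a \<sigma>"
  shows "\<exists>x. fa_elem Ib n x \<and> \<not> RL_zero Iodd t h \<Lambda> Ib n (fa_mult (fa_mult (idem a) x) (idem \<sigma>))"
proof -
  obtain c where \<sigma>: "\<sigma> \<in> admissible_Ib" and a: "a \<in> admissible_Ib" and c: "Suc c < length \<sigma>"
    and a_eq: "a = swp c \<sigma>"
    using assms by (auto simp: swap_step_def)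
  obtain rk :: "'i \<Rightarrow> nat" where rk: "inj_on rk (\<Union>(set ` Ib))"
    using finite_imp_inj_to_nat_seg[of "\<Union>(set ` Ib)"] finite_Ib by auto
  interpret tau_module I Iodd A t h \<Lambda> Ib n admissible_Ib rk "\<sigma> ! c" "\<sigma> ! Suc c"
  proof
    show "admissible_Ib \<subseteq> Ib" by (auto simp: admissible_Ib_def)
    show "\<rho> \<in> admissible_Ib \<Longrightarrow> Suc b < n \<Longrightarrow> A (\<rho> ! b) (\<rho> ! Suc b) = 0 \<Longrightarrow>
        swp b \<rho> \<in> admissible_Ib" for \<rho> b
      by (rule admissible_Ib_swp_orthogonal)
    show "0 < wt\<Lambda> (\<rho> ! 0)" if "\<rho> \<in> admissible_Ib" and "0 < n" for \<rho>
    proof (rule admissible_first_weight_pos[of A])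
      show "admissible A wt\<Lambda> \<rho>" using that(1) by (simp add: admissible_Ib_def)
      show "\<rho> \<noteq> []" using that Ib_length[of \<rho>] by (auto simp: admissible_Ib_def)
    qed
    show "\<rho> \<in> admissible_Ib \<Longrightarrow> inj_on rk (set \<rho>)" for \<rho>
      using rk by (rule inj_on_subset) (auto simp: admissible_Ib_def)
  qed
  have cn: "Suc c < n" using c Ib_length[of \<sigma>] \<sigma> by (simp add: admissible_Ib_def)
  have "\<not> vanishes (fa_mult (fa_mult (idem a) (fa_word [GT c])) (idem \<sigma>))"
    using tau_nonzero_between_idems[OF \<sigma> _ cn] a a_eq by (simp add: tau_allowed_def)
  moreover have "fa_elem Ib n (fa_word [GT c])" by (rule fa_elem_fa_word) (use cn in \<open>simp add: valid_gen_def\<close>)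
  ultimately show ?thesis unfolding RL_zero_def by blast
qed

lemma admissible_Ib_if_idem_nonvanishing: "\<rho> \<in> Ib \<Longrightarrow> \<not> vanishes (idem \<rho>) \<Longrightarrow> \<rho> \<in> admissible_Ib"
  using idem_vanishes_if_not_admissible unfolding admissible_Ib_def by blast

lemma admissible_orderings_linked:
  assumes \<mu>: "\<mu> \<in> admissible_Ib" and \<nu>: "\<nu> \<in> admissible_Ib" and "set \<mu> = set \<nu>"
  shows "\<exists>seq. seq \<noteq> [] \<and> hd seq = \<mu> \<and> last seq = \<nu> \<and> set seq \<subseteq> Ib \<and>
    (\<forall>k. Suc k < length seq \<longrightarrow> (\<exists>x. fa_elem Ib n x \<and>
      \<not> RL_zero Iodd t h \<Lambda> Ib n (fa_mult (fa_mult (idem (seq ! k)) x) (idem (seq ! Suc k)))))"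
proof -
  have path: "(swap_step admissible_Ib)\<^sup>*\<^sup>* \<mu> \<nu>"
    using admissible_swap_connected[of "[]" \<mu> \<nu>] assms by simp
  have \<mu>Ib: "\<mu> \<in> Ib" using \<mu> by (simp add: admissible_Ib_def)
  have "swap_step admissible_Ib x y \<Longrightarrow> y \<in> Ib" for x y
    by (simp add: swap_step_def admissible_Ib_def)
  with path \<mu>Ib have "\<exists>seq. seq \<noteq> [] \<and> hd seq = \<mu> \<and> last seq = \<nu> \<and> (\<forall>\<rho>\<in>set seq. \<rho> \<in> Ib) \<and>
      (\<forall>k. Suc k < length seq \<longrightarrow> swap_step admissible_Ib (seq ! k) (seq ! Suc k))"
    by (rule rtranclp_imp_chain)
  then obtain seq where seq: "seq \<noteq> []" "hd seq = \<mu>" "last seq = \<nu>" "\<forall>\<rho>\<in>set seq. \<rho> \<in> Ib"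
      "\<forall>k. Suc k < length seq \<longrightarrow> swap_step admissible_Ib (seq ! k) (seq ! Suc k)"
    by (elim exE conjE)
  show ?thesis
  proof (intro exI[of _ seq] conjI allI impI)
    show "seq \<noteq> []" "hd seq = \<mu>" "last seq = \<nu>" by (fact seq)+
    show "set seq \<subseteq> Ib" using seq(4) by blast
    fix k assume "Suc k < length seq"
    with seq(5) have "swap_step admissible_Ib (seq ! k) (seq ! Suc k)" by blast
    then show "\<exists>x. fa_elem Ib n x \<and>
        \<not> RL_zero Iodd t h \<Lambda> Ib n (fa_mult (fa_mult (idem (seq ! k)) x) (idem (seq ! Suc k)))"
      by (rule tau_nonzero_if_swap_step)
  qed
qed

end

theorem proposition5p7:

  fixes I Iodd :: "'i set"
    and A :: "'i \<Rightarrow> 'i \<Rightarrow> int" and d :: "'i \<Rightarrow> int"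
    and \<alpha> :: "'i \<Rightarrow> 'p::ab_group_add" and h :: "'i \<Rightarrow> 'p \<Rightarrow> int"
    and bf :: "'p \<Rightarrow> 'p \<Rightarrow> rat"
    and t :: "'i \<Rightarrow> 'i \<Rightarrow> nat \<Rightarrow> nat \<Rightarrow> 'k::field"
    and \<Lambda> :: 'p and js :: "'i list" and \<mu> \<nu> :: "'i list"
  assumes char: "(2::'k) \<noteq> 0"
    and A_diag: "\<forall>i\<in>I. A i i = 2"
    and A_off: "\<forall>i\<in>I. \<forall>j\<in>I. i \<noteq> j \<longrightarrow> A i j \<le> 0"
    and A_zero: "\<forall>i\<in>I. \<forall>j\<in>I. A i j = 0 \<longleftrightarrow> A j i = 0"
    and d_pos: "\<forall>i\<in>I. 0 < d i"
    and A_sym: "\<forall>i\<in>I. \<forall>j\<in>I. d i * A i j = d j * A j i"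
    and P_free: "\<exists>B::'p set. zfree_basis B"
    and \<alpha>_indep: "zlin_indep I \<alpha>"
    and h_hom: "\<forall>i\<in>I. \<forall>x y. h i (x + y) = h i x + h i y"
    and h_\<alpha>: "\<forall>i\<in>I. \<forall>j\<in>I. h i (\<alpha> j) = A i j"
    and Iodd_sub: "Iodd \<subseteq> I"
    and Iodd_even: "\<forall>i\<in>Iodd. \<forall>j\<in>I. even (A i j)"
    and bf_sym: "\<forall>x y. bf x y = bf y x"
    and bf_add: "\<forall>x y z. bf (x + y) z = bf x z + bf y z"
    and bf_\<alpha>: "\<forall>i\<in>I. \<forall>x. bf (\<alpha> i) x = of_int (d i * h i x)"
    and t_deg: "\<forall>i\<in>I. \<forall>j\<in>I. \<forall>r s. t i j r s \<noteq> 0 \<longrightarrow>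
                  - 2 * bf (\<alpha> i) (\<alpha> j) - of_nat r * bf (\<alpha> i) (\<alpha> i) - of_nat s * bf (\<alpha> j) (\<alpha> j) = 0"
    and t_sym: "\<forall>i\<in>I. \<forall>j\<in>I. \<forall>r s. t i j r s = t j i s r"
    and t_unit: "\<forall>i\<in>I. \<forall>j\<in>I. i \<noteq> j \<longrightarrow> t i j (nat (- A i j)) 0 \<noteq> 0"
    and t_diag: "\<forall>i\<in>I. \<forall>r s. t i i r s = 0"
    and t_odd: "\<forall>i\<in>Iodd. \<forall>j\<in>I. \<forall>r s. odd r \<longrightarrow> t i j r s = 0"
    and \<Lambda>_dom: "\<forall>i\<in>I. 0 \<le> h i \<Lambda>"
    and js: "set js \<subseteq> I" "distinct js"
    and \<mu>: "\<mu> \<in> Ibeta I \<alpha> (sum_list (map \<alpha> js))"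
    and \<nu>: "\<nu> \<in> Ibeta I \<alpha> (sum_list (map \<alpha> js))"
    and \<mu>_nz: "\<not> RL_zero Iodd t h \<Lambda> (Ibeta I \<alpha> (sum_list (map \<alpha> js))) (length js) (idem \<mu>)"
    and \<nu>_nz: "\<not> RL_zero Iodd t h \<Lambda> (Ibeta I \<alpha> (sum_list (map \<alpha> js))) (length js) (idem \<nu>)"
  shows "\<exists>seq. seq \<noteq> [] \<and> hd seq = \<mu> \<and> last seq = \<nu> \<and>
           set seq \<subseteq> Ibeta I \<alpha> (sum_list (map \<alpha> js)) \<and>
           (\<forall>k. Suc k < length seq \<longrightarrow>
              (\<exists>a. fa_elem (Ibeta I \<alpha> (sum_list (map \<alpha> js))) (length js) a \<and>
                 \<not> RL_zero Iodd t h \<Lambda> (Ibeta I \<alpha> (sum_list (map \<alpha> js))) (length js)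
                     (fa_mult (fa_mult (idem (seq ! k)) a) (idem (seq ! Suc k)))))"
proof -
  let ?Ib = "Ibeta I \<alpha> (sum_list (map \<alpha> js))"
  interpret multfree_datum I Iodd A t h \<Lambda> ?Ib "length js"
    by (rule multfree_datum_Ibeta[OF A_diag A_off A_zero d_pos \<alpha>_indep h_\<alpha> bf_\<alpha> t_deg t_sym t_unit
          \<Lambda>_dom js])
  have "\<mu> \<in> admissible_Ib" and "\<nu> \<in> admissible_Ib"
    using admissible_Ib_if_idem_nonvanishing[OF \<mu> \<mu>_nz[unfolded RL_zero_def]]
      admissible_Ib_if_idem_nonvanishing[OF \<nu> \<nu>_nz[unfolded RL_zero_def]] .
  moreover have "set \<mu> = set \<nu>" using Ibeta_multiplicity_free(2)[OF \<alpha>_indep js] \<mu> \<nu> by simp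
  ultimately show ?thesis by (rule admissible_orderings_linked)
qed

end
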